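(* Let $G$ be a finite subgroup of $\mathrm{SU}(2)$ and $\lambda: G\to \mathrm{U}(K)$ an irreducible representation. Let $\mathcal{C}$ be a $((j,K,d))$ spin code with encoding isometry $V:\mathbb{C}^K\to \mathcal{H}_j$ which is $(G,\lambda)$-covariant, i.e. $D^j(g)V = V\lambda(g)$ for all $g\in G$. Let $n=2j$. Then the image $\mathscr{D}(\mathcal{C})$ of the code under the Dicke state mapping is a permutationally invariant $n$-qubit code of dimension $K$ and distance $d$ (an $((n,K,d))$ code), and it is $G$-transversal: $g^{\otimes n}(\mathscr{D}V) = (\mathscr{D}V)\lambda(g)$ for all $g\in G$.
   Context: For a half-integer or integer $j\ge 0$, $\mathcal{H}_j$ denotes the spin-$j$ irreducible representation of $\mathrm{SU}(2)$, of dimension $2j+1$, with orthonormal $J_z$-eigenbasis $|j,m\rangle$, $m=-j,\dots,j$; $D^j(g)$ is the action of $g\in\mathrm{SU}(2)$ (Wigner $D$-operator). The spherical tensors are $T^k_q=\sqrt{\tfrac{2k+1}{2j+1}}\sum_{m=-j}^{j}C^{j\,m+q}_{k\,q,\,j\,m}|j,m+q\rangle\langle j,m|$ for $0\le k\le 2j$, $-k\le q\le k$ (Clebsch–Gordan coefficients; terms with $|m+q|>j$ vanish). A spin code is a $K$-dimensional subspace of $\mathcal{H}_j$; it is a $((j,K,d))$ spin code (distance $d$) if for all codewords $|\phi\rangle,|\psi\rangle$ and all $0\le k<d$, $-k\le q\le k$: $\langle\phi|T^k_q|\psi\rangle=c_{k,q}\langle\phi|\psi\rangle$ with $c_{k,q}$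 independent of the codewords. The Dicke state mapping $\mathscr{D}$ is the linear isometry $\mathcal{H}_j\to(\mathbb{C}^2)^{\otimes 2j}$ with $|j,m\rangle\mapsto |D^{2j}_{j-m}\rangle$, where $|D^n_w\rangle$ is the normalized uniform superposition of all $n$-qubit computational basis states of Hamming weight $w$. An $n$-qubit code (subspace) has distance $d$, written $((n,K,d))$ when of dimension $K$, if for all codewords $|\phi\rangle,|\psi\rangle$ and every $n$-qubit Pauli operator $E$ of weight $<d$ (weight = number of non-identity tensor factors), $\langle\phi|E|\psi\rangle=c_E\langle\phi|\psi\rangle$ with $c_E$ independent of the codewords. A multiqubit code is permutationally invariant if every codeword is invariant under all permutations of the qubits. *)

theory Defs
  imports Complex_Main "Jordan_Normal_Form.Matrix" "Jordan_Normal_Form.Determinant"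
    "Jordan_Normal_Form.DL_Rank"
begin

definition cadj :: "complex mat \<Rightarrow> complex mat" where
  "cadj A = mat (dim_col A) (dim_row A) (\<lambda>(i,k). cnj (A $$ (k,i)))"

definition cinner :: "complex vec \<Rightarrow> complex vec \<Rightarrow> complex" where
  "cinner \<phi> \<psi> = (\<Sum>i<dim_vec \<psi>. cnj (\<phi> $ i) * \<psi> $ i)"

definition unitary_mat :: "nat \<Rightarrow> complex mat \<Rightarrow> bool" where
  "unitary_mat N U \<longleftrightarrow> U \<in> carrier_mat N N \<and> cadj U * U = 1\<^sub>m N \<and> U * cadj U = 1\<^sub>m N"

definition isometry_mat :: "nat \<Rightarrow> nat \<Rightarrow> complex mat \<Rightarrow> bool" where
  "isometry_mat N K V \<longleftrightarrow> V \<in> carrier_mat N K \<and> cadj V * V = 1\<^sub>m K"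

definition image_mat :: "complex mat \<Rightarrow> complex vec set" where
  "image_mat V = {V *\<^sub>v x | x. x \<in> carrier_vec (dim_col V)}"

definition is_subspace :: "nat \<Rightarrow> complex vec set \<Rightarrow> bool" where
  "is_subspace N W \<longleftrightarrow> W \<subseteq> carrier_vec N \<and> 0\<^sub>v N \<in> W \<and>
     (\<forall>v\<in>W. \<forall>w\<in>W. v + w \<in> W) \<and> (\<forall>c. \<forall>v\<in>W. c \<cdot>\<^sub>v v \<in> W)"

definition SU2 :: "complex mat set" where
  "SU2 = {U. unitary_mat 2 U \<and> det U = 1}"

definition finite_subgroup_SU2 :: "complex mat set \<Rightarrow> bool" where
  "finite_subgroup_SU2 G \<longleftrightarrow> finite G \<and> G \<subseteq> SU2 \<and> 1\<^sub>m 2 \<in> G \<and>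
     (\<forall>g\<in>G. \<forall>h\<in>G. g * h \<in> G) \<and> (\<forall>g\<in>G. \<exists>h\<in>G. g * h = 1\<^sub>m 2)"

definition unitary_rep :: "complex mat set \<Rightarrow> nat \<Rightarrow> (complex mat \<Rightarrow> complex mat) \<Rightarrow> bool" where
  "unitary_rep G K rho \<longleftrightarrow> (\<forall>g\<in>G. unitary_mat K (rho g)) \<and>
     (\<forall>g\<in>G. \<forall>h\<in>G. rho (g * h) = rho g * rho h)"

definition irreducible_rep :: "complex mat set \<Rightarrow> nat \<Rightarrow> (complex mat \<Rightarrow> complex mat) \<Rightarrow> bool" where
  "irreducible_rep G K rho \<longleftrightarrow> unitary_rep G K rho \<and> K > 0 \<and>
     (\<forall>W. is_subspace K W \<and> (\<forall>g\<in>G. \<forall>w\<in>W. rho g *\<^sub>v w \<in> W)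
        \<longrightarrow> W = {0\<^sub>v K} \<or> W = carrier_vec K)"

section \<open>Spin-j representation (n = 2j), basis index a = j - m \<in> {0..n}\<close>

text \<open>D^j(g) is realised as the standard action of g on homogeneous polynomials of degree
  n = 2j in two variables x, y (x \<leftrightarrow> m = +1/2, y \<leftrightarrow> m = -1/2), in the orthonormal basis
  |j,m\<rangle> \<leftrightarrow> x^(j+m) y^(j-m) / sqrt((j+m)! (j-m)!) (standard Condon--Shortley phases).
  Entry (b,a): coefficient of basis vector b (m' = j - b) in D^j(g)|j, j - a\<rangle>.\<close>
definition wignerD :: "nat \<Rightarrow> complex mat \<Rightarrow> complex mat" where
  "wignerD n g = mat (n+1) (n+1) (\<lambda>(b,a).
     complex_of_real (sqrt (fact b * fact (n-b) / (fact a * fact (n-a)))) *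
     (\<Sum>k\<in>{0..n-a}. if k \<le> b \<and> b - k \<le> a then
        of_nat ((n-a) choose k) * g$$(0,0)^(n-a-k) * g$$(1,0)^k *
        of_nat (a choose (b-k)) * g$$(0,1)^(a-(b-k)) * g$$(1,1)^(b-k)
      else 0))"

section \<open>Clebsch--Gordan coefficients (Racah formula), all arguments doubled\<close>

definition hfact :: "int \<Rightarrow> real" where
  "hfact x = fact (nat (x div 2))"

text \<open>cg tj1 tm1 tj2 tm2 tJ tM = C^{J M}_{j1 m1, j2 m2} = \<langle>j1 m1 j2 m2 | J M\<rangle> with tj1 = 2 j1 etc.\<close>
definition cg :: "int \<Rightarrow> int \<Rightarrow> int \<Rightarrow> int \<Rightarrow> int \<Rightarrow> int \<Rightarrow> real" where
  "cg tj1 tm1 tj2 tm2 tJ tM =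
    (if 0 \<le> tj1 \<and> 0 \<le> tj2 \<and> 0 \<le> tJ \<and> \<bar>tm1\<bar> \<le> tj1 \<and> \<bar>tm2\<bar> \<le> tj2 \<and> \<bar>tM\<bar> \<le> tJ \<and>
        even (tj1 - tm1) \<and> even (tj2 - tm2) \<and> even (tJ - tM) \<and>
        \<bar>tj1 - tj2\<bar> \<le> tJ \<and> tJ \<le> tj1 + tj2 \<and> even (tj1 + tj2 + tJ) \<and> tM = tm1 + tm2
     then
       sqrt ((tJ + 1) * hfact (tJ + tj1 - tj2) * hfact (tJ - tj1 + tj2) * hfact (tj1 + tj2 - tJ)
             / hfact (tj1 + tj2 + tJ + 2)) *
       sqrt (hfact (tJ + tM) * hfact (tJ - tM) * hfact (tj1 - tm1) * hfact (tj1 + tm1) *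
             hfact (tj2 - tm2) * hfact (tj2 + tm2)) *
       (\<Sum>k\<in>{0..nat (tj1 + tj2 + tJ)}.
          let tk = 2 * int k in
          if 0 \<le> tj1 + tj2 - tJ - tk \<and> 0 \<le> tj1 - tm1 - tk \<and> 0 \<le> tj2 + tm2 - tk \<and>
             0 \<le> tJ - tj2 + tm1 + tk \<and> 0 \<le> tJ - tj1 - tm2 + tk
          then (-1) ^ k / (fact k * hfact (tj1 + tj2 - tJ - tk) * hfact (tj1 - tm1 - tk) *
                 hfact (tj2 + tm2 - tk) * hfact (tJ - tj2 + tm1 + tk) * hfact (tJ - tj1 - tm2 + tk))
          else 0)
     else 0)"

text \<open>Matrix entry (b,a) = \<langle>j, j-b| T^k_q |j, j-a\<rangle>; nonzero only if j-b = (j-a)+q.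
  Here 2m = n - 2a.\<close>
definition sph_tensor :: "nat \<Rightarrow> nat \<Rightarrow> int \<Rightarrow> complex mat" where
  "sph_tensor n k q = mat (n+1) (n+1) (\<lambda>(b,a).
     if int b = int a - q then
       complex_of_real (sqrt ((2 * real k + 1) / (real n + 1)) *
         cg (2 * int k) (2 * q) (int n) (int n - 2 * int a) (int n) (int n - 2 * int a + 2 * q))
     else 0)"

definition spin_code_distance :: "nat \<Rightarrow> nat \<Rightarrow> complex vec set \<Rightarrow> bool" where
  "spin_code_distance n d C \<longleftrightarrow>
     (\<forall>k. k < d \<and> k \<le> n \<longrightarrow> (\<forall>q. \<bar>q\<bar> \<le> int k \<longrightarrow>
        (\<exists>c. \<forall>\<phi>\<in>C. \<forall>\<psi>\<in>C. cinner \<phi> (sph_tensor n k q *\<^sub>v \<psi>) = c * cinner \<phi> \<psi>)))"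

definition spin_code_with_isometry :: "nat \<Rightarrow> nat \<Rightarrow> nat \<Rightarrow> complex mat \<Rightarrow> bool" where
  "spin_code_with_isometry n K d V \<longleftrightarrow>
     isometry_mat (n+1) K V \<and> spin_code_distance n d (image_mat V)"

text \<open>Computational basis state x \<in> {0..<2^n}; qubit i is bit i of x.\<close>
definition qbit :: "nat \<Rightarrow> nat \<Rightarrow> nat" where
  "qbit x i = (x div 2 ^ i) mod 2"

definition hamming_wt :: "nat \<Rightarrow> nat \<Rightarrow> nat" where
  "hamming_wt n x = card {i. i < n \<and> qbit x i = 1}"

text \<open>Dicke mapping as a 2^n \<times> (n+1) matrix: |j,m\<rangle> = basis a = j - m \<mapsto> |D^n_a\<rangle>.\<close>
definition dicke_map :: "nat \<Rightarrow> complex mat" where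
  "dicke_map n = mat (2^n) (n+1) (\<lambda>(x,a).
     if hamming_wt n x = a then complex_of_real (1 / sqrt (real (n choose a))) else 0)"

text \<open>Tensor product A_0 \<otimes> ... \<otimes> A_{n-1} of single-qubit (2\<times>2) operators.\<close>
definition tensor_ops :: "nat \<Rightarrow> (nat \<Rightarrow> complex mat) \<Rightarrow> complex mat" where
  "tensor_ops n A = mat (2^n) (2^n) (\<lambda>(x,y). \<Prod>i<n. A i $$ (qbit x i, qbit y i))"

definition tensor_pow :: "nat \<Rightarrow> complex mat \<Rightarrow> complex mat" where
  "tensor_pow n g = tensor_ops n (\<lambda>_. g)"

definition pauli1 :: "nat \<Rightarrow> complex mat" where
  "pauli1 p = (if p = 1 then mat_of_rows_list 2 [[0,1],[1,0]]
              else if p = 2 then mat_of_rows_list 2 [[0,-\<i>],[\<i>,0]]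
              else if p = 3 then mat_of_rows_list 2 [[1,0],[0,-1]]
              else 1\<^sub>m 2)"

definition pauli_op :: "nat \<Rightarrow> (nat \<Rightarrow> nat) \<Rightarrow> complex mat" where
  "pauli_op n p = tensor_ops n (\<lambda>i. pauli1 (p i))"

definition pauli_weight :: "nat \<Rightarrow> (nat \<Rightarrow> nat) \<Rightarrow> nat" where
  "pauli_weight n p = card {i. i < n \<and> p i \<noteq> 0}"

definition qubit_code_distance :: "nat \<Rightarrow> nat \<Rightarrow> complex vec set \<Rightarrow> bool" where
  "qubit_code_distance n d Q \<longleftrightarrow>
     (\<forall>p. (\<forall>i<n. p i < 4) \<and> pauli_weight n p < d \<longrightarrow>
        (\<exists>c. \<forall>\<phi>\<in>Q. \<forall>\<psi>\<in>Q. cinner \<phi> (pauli_op n p *\<^sub>v \<psi>) = c * cinner \<phi> \<psi>))"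

definition permute_basis :: "nat \<Rightarrow> (nat \<Rightarrow> nat) \<Rightarrow> nat \<Rightarrow> nat" where
  "permute_basis n \<sigma> x = (\<Sum>i<n. qbit x (\<sigma> i) * 2 ^ i)"

definition perm_vec :: "nat \<Rightarrow> (nat \<Rightarrow> nat) \<Rightarrow> complex vec \<Rightarrow> complex vec" where
  "perm_vec n \<sigma> \<psi> = vec (2^n) (\<lambda>x. \<psi> $ permute_basis n \<sigma> x)"

definition perm_invariant_code :: "nat \<Rightarrow> complex vec set \<Rightarrow> bool" where
  "perm_invariant_code n Q \<longleftrightarrow>
     (\<forall>\<sigma>. \<sigma> permutes {..<n} \<longrightarrow> (\<forall>\<psi>\<in>Q. perm_vec n \<sigma> \<psi> = \<psi>))"

definition code_dim :: "complex mat \<Rightarrow> nat" where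
  "code_dim W = vec_space.rank (dim_row W) W"

end

theory Submission
  imports Defs "HOL-Library.Indicator_Function" "HOL-Computational_Algebra.Polynomial"
begin

text \<open>Identify computational basis states with subsets of the \<open>n\<close> qubits, so that the Dicke state
  \<open>|D\<^sup>n\<^sub>a\<rangle>\<close> is the normalised indicator of the \<open>a\<close>-element subsets. The entries of \<open>g\<^sup>\<otimes>\<^sup>n\<close>
  factor over the qubits, and counting subsets gives \<open>g\<^sup>\<otimes>\<^sup>n \<D> = \<D> D\<^sup>j(g)\<close>; with the covariance
  of \<open>V\<close> this is transversality. \<open>\<D>\<close> is an isometry onto permutation-invariant vectors, which
  gives the dimension and the permutation invariance.

  For the distance, let \<open>E\<close> be a Pauli operator supported on a set \<open>S\<close> of \<open>w < d\<close> qubits.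
  Splitting subsets along \<open>S\<close> writes \<open>\<D>\<^sup>\<dagger> E \<D>\<close> as a combination of the operators
  \<open>B(s,t)\<close> with entries \<open>C(n-w, a-t) / \<surd>(C(n,a) C(n,b))\<close> on the diagonal \<open>b - a = s - t\<close>.
  Along that diagonal both \<open>B(s,t)\<close> and the spherical tensors \<open>T\<^sup>l\<^sub>t\<^sub>-\<^sub>s\<close> are, up to a common
  factor, polynomials in the position on the diagonal, of degree at most \<open>w - |t - s|\<close> and exactly
  \<open>l - |t - s|\<close> respectively (Racah's formula). Hence \<open>B(s,t)\<close> is a combination of spherical
  tensors of rank \<open>l \<le> w < d\<close>, and the Knill--Laflamme conditions of the spin code pass to the
  qubit code.\<close>

section \<open>Computational basis states as subsets of qubits\<close>

definition bitset :: "nat \<Rightarrow> nat \<Rightarrow> nat set" where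
  "bitset n x = {i. i < n \<and> qbit x i = 1}"

lemma qbit_cases: "qbit x i = 0 \<or> qbit x i = 1"
  unfolding qbit_def by auto

lemma qbit_le_1: "qbit x i \<le> 1"
  using qbit_cases[of x i] by auto

lemma hamming_wt_eq_card_bitset: "hamming_wt n x = card (bitset n x)"
  unfolding hamming_wt_def bitset_def by simp

lemma bitset_subset: "bitset n x \<subseteq> {..<n}"
  unfolding bitset_def by auto

lemma card_bitset_le: "card (bitset n x) \<le> n"
  using card_mono[OF _ bitset_subset, of n x] by simp

lemma qbit_eq_indicator: "i < n \<Longrightarrow> qbit x i = indicator (bitset n x) i"
  unfolding bitset_def indicator_def using qbit_cases[of x i] by auto

lemma qbit_0: "qbit x 0 = x mod 2"
  unfolding qbit_def by simp

lemma qbit_Suc: "qbit x (Suc i) = qbit (x div 2) i"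
  unfolding qbit_def by (simp add: div_mult2_eq)

lemma sum_qbit_pow2: "x < 2^n \<Longrightarrow> (\<Sum>i<n. qbit x i * 2^i) = x"
proof (induction n arbitrary: x)
  case 0
  then show ?case by simp
next
  case (Suc n)
  have "(\<Sum>i<Suc n. qbit x i * 2^i) = qbit x 0 + (\<Sum>i<n. qbit x (Suc i) * 2^(Suc i))"
    by (simp only: sum.lessThan_Suc_shift) simp
  also have "\<dots> = x mod 2 + 2 * (\<Sum>i<n. qbit (x div 2) i * 2^i)"
    by (simp add: qbit_Suc qbit_0 sum_distrib_left mult.commute mult.left_commute)
  also have "\<dots> = x" using Suc by simp
  finally show ?case .
qed

lemma binary_digits_sum_pow2:
  "\<forall>i. c i \<le> (1::nat) \<Longrightarrow>
   (\<Sum>i<n. c i * 2^i) < 2^n \<and> (\<forall>j<n. qbit (\<Sum>i<n. c i * 2^i) j = c j)"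
proof (induction n arbitrary: c)
  case 0
  then show ?case by simp
next
  case (Suc n)
  define c' where "c' = (\<lambda>i. c (Suc i))"
  have "\<forall>i. c' i \<le> 1" using Suc.prems by (simp add: c'_def)
  note IH = Suc.IH[OF this]
  have split: "(\<Sum>i<Suc n. c i * 2^i) = c 0 + 2 * (\<Sum>i<n. c' i * 2^i)"
    by (simp only: sum.lessThan_Suc_shift)
      (simp add: c'_def sum_distrib_left mult.commute mult.left_commute)
  have c0: "c 0 \<le> 1" using Suc.prems by simp
  have "qbit (\<Sum>i<Suc n. c i * 2^i) j = c j" if j: "j < Suc n" for j
  proof -
    have "(c 0 + 2 * (\<Sum>i<n. c' i * 2^i)) div 2 = (\<Sum>i<n. c' i * 2^i)" using c0 by auto
    then show ?thesis
      unfolding split using IH j c0 by (cases j) (auto simp: qbit_0 qbit_Suc c'_def)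
  qed
  then show ?case unfolding split using IH c0 by simp
qed

lemma bij_betw_bitset: "bij_betw (bitset n) {..<2^n} (Pow {..<n})"
proof (rule bij_betw_imageI)
  show "inj_on (bitset n) {..<2^n}"
  proof (rule inj_onI)
    fix x y assume "x \<in> {..<2^n}" "y \<in> {..<2^n}" and eq: "bitset n x = bitset n y"
    have "qbit x i = qbit y i" if "i < n" for i
      using that eq by (simp add: qbit_eq_indicator)
    then have "(\<Sum>i<n. qbit x i * 2^i) = (\<Sum>i<n. qbit y i * 2^i)" by simp
    then show "x = y" using sum_qbit_pow2 \<open>x \<in> _\<close> \<open>y \<in> _\<close> by simp
  qed
  show "bitset n ` {..<2^n} = Pow {..<n}"
  proof
    show "bitset n ` {..<2^n} \<subseteq> Pow {..<n}" using bitset_subset by auto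
    show "Pow {..<n} \<subseteq> bitset n ` {..<2^n}"
    proof
      fix S assume S: "S \<in> Pow {..<n}"
      define c where "c = (\<lambda>i. indicator S i :: nat)"
      have "\<forall>i. c i \<le> 1" by (simp add: c_def indicator_def)
      note digits = binary_digits_sum_pow2[OF this, of n]
      have "bitset n (\<Sum>i<n. c i * 2^i) = S"
        using digits S unfolding bitset_def c_def by (auto simp: indicator_def of_bool_def split: if_splits)
      then show "S \<in> bitset n ` {..<2^n}" using digits by force
    qed
  qed
qed

lemma sum_bitset: "(\<Sum>x<2^n. f (bitset n x)) = (\<Sum>X\<in>Pow {..<n}. f X)"
  using sum.reindex_bij_betw[OF bij_betw_bitset] by blast

lemma tensor_ops_carrier: "tensor_ops n A \<in> carrier_mat (2^n) (2^n)"
  unfolding tensor_ops_def by simp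

lemma tensor_ops_index:
  "x < 2^n \<Longrightarrow> y < 2^n \<Longrightarrow>
   tensor_ops n A $$ (x,y) = (\<Prod>i<n. A i $$ (indicator (bitset n x) i, indicator (bitset n y) i))"
  unfolding tensor_ops_def by (auto simp: qbit_eq_indicator intro!: prod.cong)

lemma sum_Pow_Un_split:
  assumes "finite T" "S \<subseteq> T"
  shows "(\<Sum>X\<in>Pow T. f X) = (\<Sum>A\<in>Pow S. \<Sum>B\<in>Pow (T - S). f (A \<union> B))"
proof -
  have "(\<Sum>A\<in>Pow S. \<Sum>B\<in>Pow (T - S). f (A \<union> B)) = (\<Sum>(A,B)\<in>Pow S \<times> Pow (T - S). f (A \<union> B))"
    by (rule sum.cartesian_product)
  also have "\<dots> = (\<Sum>X\<in>Pow T. f X)"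
    by (rule sum.reindex_bij_witness[where i = "\<lambda>X. (X \<inter> S, X - S)" and j = "\<lambda>(A,B). A \<union> B"])
       (use assms in auto)
  finally show ?thesis by simp
qed

lemma sum_Pow_card:
  assumes "finite X"
  shows "(\<Sum>A\<in>Pow X. h (card A)) = (\<Sum>i\<le>card X. of_nat (card X choose i) * (h i :: 'a::comm_semiring_1))"
proof -
  have "card ` Pow X \<subseteq> {..card X}" using assms by (auto intro: card_mono)
  then have "(\<Sum>A\<in>Pow X. h (card A)) = (\<Sum>i\<le>card X. \<Sum>A\<in>{A \<in> Pow X. card A = i}. h (card A))"
    using sum.group[of "Pow X" "{..card X}" card "\<lambda>A. h (card A)"] assms by simp
  also have "\<dots> = (\<Sum>i\<le>card X. of_nat (card X choose i) * h i)"
  proof (intro sum.cong refl)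
    fix i
    have "{A \<in> Pow X. card A = i} = {B. B \<subseteq> X \<and> card B = i}" by auto
    then have "card {A \<in> Pow X. card A = i} = card X choose i" using n_subsets[OF assms] by simp
    then show "(\<Sum>A\<in>{A \<in> Pow X. card A = i}. h (card A)) = of_nat (card X choose i) * h i" by simp
  qed
  finally show ?thesis .
qed

lemma prod_indicator:
  assumes "finite Z" "A \<subseteq> Z"
  shows "(\<Prod>i\<in>Z. f (indicator A i)) = f 1 ^ card A * f 0 ^ (card Z - card A)"
proof -
  have "(\<Prod>i\<in>Z. f (indicator A i)) = (\<Prod>i\<in>Z - A. f (indicator A i)) * (\<Prod>i\<in>A. f (indicator A i))"
    by (rule prod.subset_diff[OF assms(2,1)])
  also have "\<dots> = (\<Prod>i\<in>Z - A. f 0) * (\<Prod>i\<in>A. f 1)"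
    by (intro arg_cong2[where f = "(*)"] prod.cong) auto
  also have "\<dots> = f 1 ^ card A * f 0 ^ (card Z - card A)"
    using assms by (simp add: card_Diff_subset finite_subset mult.commute)
  finally show ?thesis .
qed

lemma dim_cadj [simp]: "dim_row (cadj A) = dim_col A" "dim_col (cadj A) = dim_row A"
  unfolding cadj_def by auto

lemma cadj_index [simp]: "i < dim_col A \<Longrightarrow> j < dim_row A \<Longrightarrow> cadj A $$ (i,j) = cnj (A $$ (j,i))"
  unfolding cadj_def by auto

lemma cadj_carrier_mat: "A \<in> carrier_mat m n \<Longrightarrow> cadj A \<in> carrier_mat n m"
  unfolding cadj_def by auto

lemma cadj_cadj [simp]: "cadj (cadj A) = A"
  by (rule eq_matI) auto

lemma cadj_mult:
  assumes "A \<in> carrier_mat m n" "B \<in> carrier_mat n p"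
  shows "cadj (A * B) = cadj B * cadj A"
proof (rule eq_matI)
  fix i j assume "i < dim_row (cadj B * cadj A)" "j < dim_col (cadj B * cadj A)"
  then show "cadj (A * B) $$ (i, j) = (cadj B * cadj A) $$ (i, j)"
    using assms by (simp add: scalar_prod_def atLeast0LessThan mult.commute)
qed (use assms in simp_all)

lemma index_mult_mat_sum:
  "A \<in> carrier_mat m n \<Longrightarrow> B \<in> carrier_mat n p \<Longrightarrow> i < m \<Longrightarrow> j < p \<Longrightarrow>
   (A * B) $$ (i,j) = (\<Sum>k<n. A $$ (i,k) * B $$ (k,j))"
  by (auto simp: scalar_prod_def atLeast0LessThan intro!: sum.cong)

lemma index_mult_mat_vec_sum:
  "A \<in> carrier_mat m n \<Longrightarrow> v \<in> carrier_vec n \<Longrightarrow> i < m \<Longrightarrow>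
   (A *\<^sub>v v) $ i = (\<Sum>k<n. A $$ (i,k) * v $ k)"
  by (auto simp: scalar_prod_def atLeast0LessThan intro!: sum.cong)

lemma cinner_mult_mat_vec_right:
  assumes "A \<in> carrier_mat m n" "u \<in> carrier_vec m" "v \<in> carrier_vec n"
  shows "cinner u (A *\<^sub>v v) = cinner (cadj A *\<^sub>v u) v"
proof -
  have "cinner u (A *\<^sub>v v) = (\<Sum>i<m. cnj (u $ i) * (\<Sum>k<n. A $$ (i,k) * v $ k))"
    unfolding cinner_def using assms by (simp add: scalar_prod_def atLeast0LessThan)
  also have "\<dots> = (\<Sum>k<n. (\<Sum>i<m. cnj (u $ i) * A $$ (i,k)) * v $ k)"
    by (simp add: sum_distrib_left sum_distrib_right mult.assoc) (rule sum.swap)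
  also have "\<dots> = cinner (cadj A *\<^sub>v u) v"
    unfolding cinner_def using assms cadj_carrier_mat[OF assms(1)]
    by (simp add: scalar_prod_def atLeast0LessThan mult.commute)
  finally show ?thesis .
qed

lemma cinner_mult_mat_vec_left:
  assumes "A \<in> carrier_mat m n" "u \<in> carrier_vec n" "w \<in> carrier_vec m"
  shows "cinner (A *\<^sub>v u) w = cinner u (cadj A *\<^sub>v w)"
  using cinner_mult_mat_vec_right[OF cadj_carrier_mat[OF assms(1)] assms(2,3)] by simp

lemma cinner_isometry:
  assumes "isometry_mat m n A" "u \<in> carrier_vec n" "v \<in> carrier_vec n"
  shows "cinner (A *\<^sub>v u) (A *\<^sub>v v) = cinner u v"
proof -
  have A: "A \<in> carrier_mat m n" "cadj A * A = 1\<^sub>m n"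
    using assms(1) unfolding isometry_mat_def by auto
  have "cinner (A *\<^sub>v u) (A *\<^sub>v v) = cinner u (cadj A *\<^sub>v (A *\<^sub>v v))"
    using A assms by (simp add: cinner_mult_mat_vec_left)
  also have "cadj A *\<^sub>v (A *\<^sub>v v) = (cadj A * A) *\<^sub>v v"
    using assoc_mult_mat_vec[OF cadj_carrier_mat[OF A(1)] A(1) assms(3)] by simp
  finally show ?thesis using A assms by simp
qed

lemma isometry_mat_mult:
  assumes "isometry_mat m n A" "isometry_mat n k B"
  shows "isometry_mat m k (A * B)"
proof -
  have A: "A \<in> carrier_mat m n" "cadj A * A = 1\<^sub>m n"
    and B: "B \<in> carrier_mat n k" "cadj B * B = 1\<^sub>m k"
    using assms unfolding isometry_mat_def by auto
  have cA: "cadj A \<in> carrier_mat n m" and cB: "cadj B \<in> carrier_mat k n"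
    using A B cadj_carrier_mat by auto
  have "cadj (A * B) * (A * B) = (cadj B * cadj A) * (A * B)"
    using cadj_mult[OF A(1) B(1)] by simp
  also have "\<dots> = cadj B * ((cadj A * A) * B)"
    using assoc_mult_mat[OF cB cA mult_carrier_mat[OF A(1) B(1)]] assoc_mult_mat[OF cA A(1) B(1)] by simp
  also have "\<dots> = 1\<^sub>m k" using A B by simp
  finally show ?thesis using A B unfolding isometry_mat_def by auto
qed

lemma rank_isometry:
  assumes "isometry_mat m k W"
  shows "vec_space.rank m W = k"
proof -
  interpret vs: vec_space "TYPE(complex)" m .
  have W: "W \<in> carrier_mat m k" and iso: "cadj W * W = 1\<^sub>m k"
    using assms unfolding isometry_mat_def by auto
  have cW: "cadj W \<in> carrier_mat k m" using W cadj_carrier_mat by blast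
  have gram: "(cadj W * W) $$ (i,j) = (\<Sum>l<m. cnj (col W i $ l) * col W j $ l)" if "i < k" "j < k" for i j
    using W that by (simp add: scalar_prod_def atLeast0LessThan)
  have dist: "distinct (cols W)"
    unfolding distinct_conv_nth
  proof (intro allI impI)
    fix i j assume ij: "i < length (cols W)" "j < length (cols W)" "i \<noteq> j"
    then have i: "i < k" and j: "j < k" using W by auto
    show "cols W ! i \<noteq> cols W ! j"
    proof
      assume "cols W ! i = cols W ! j"
      then have "col W i = col W j" using ij by simp
      then have "(cadj W * W) $$ (i,j) = (cadj W * W) $$ (i,i)" using gram i j by simp
      then show False using iso i j ij(3) by simp
    qed
  qed
  have "vs.lin_indpt (set (cols W))"
  proof
    assume "vs.lin_dep (set (cols W))"
    then obtain v where v: "v \<in> carrier_vec k" "v \<noteq> 0\<^sub>v k" "W *\<^sub>v v = 0\<^sub>v m"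
      using vs.lin_depE[OF W _ dist] by blast
    have "v = (cadj W * W) *\<^sub>v v" using iso v by simp
    also have "\<dots> = cadj W *\<^sub>v (W *\<^sub>v v)" using W cW v by simp
    also have "\<dots> = 0\<^sub>v k" using v W cW by (intro eq_vecI) (auto simp: carrier_matD)
    finally show False using v by simp
  qed
  then show ?thesis using vs.lin_indpt_full_rank[OF W dist] by simp
qed

section \<open>The Dicke map\<close>

lemma dicke_map_carrier: "dicke_map n \<in> carrier_mat (2^n) (n+1)"
  unfolding dicke_map_def by simp

lemma dim_dicke_map [simp]: "dim_row (dicke_map n) = 2^n" "dim_col (dicke_map n) = n+1"
  unfolding dicke_map_def by auto

lemma dicke_map_index:
  "x < 2^n \<Longrightarrow> a \<le> n \<Longrightarrow> dicke_map n $$ (x,a) =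
   (if card (bitset n x) = a then complex_of_real (1 / sqrt (real (n choose a))) else 0)"
  unfolding dicke_map_def by (simp add: hamming_wt_eq_card_bitset)

lemma dicke_map_isometry: "isometry_mat (2^n) (n+1) (dicke_map n)"
  unfolding isometry_mat_def
proof (intro conjI dicke_map_carrier eq_matI)
  let ?D = "dicke_map n"
  fix a b assume "a < dim_row (1\<^sub>m (n + 1))" "b < dim_col (1\<^sub>m (n + 1))"
  then have a: "a \<le> n" and b: "b \<le> n" by auto
  define c where "c = complex_of_real (1 / sqrt (real (n choose a)))"
  have cD: "cadj ?D \<in> carrier_mat (n+1) (2^n)" using cadj_carrier_mat[OF dicke_map_carrier] .
  have "(cadj ?D * ?D) $$ (a,b) = (\<Sum>x<2^n. cnj (?D $$ (x,a)) * ?D $$ (x,b))"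
    using index_mult_mat_sum[OF cD dicke_map_carrier] a b by simp
  also have "\<dots> = (\<Sum>x<2^n. (\<lambda>X. if card X = a \<and> card X = b then c^2 else 0) (bitset n x))"
    using a b by (intro sum.cong) (auto simp: dicke_map_index c_def power2_eq_square)
  also have "\<dots> = (\<Sum>X\<in>Pow {..<n}. if card X = a \<and> card X = b then c^2 else 0)"
    by (rule sum_bitset)
  also have "\<dots> = (if a = b then of_nat (card {X \<in> Pow {..<n}. card X = a}) * c^2 else 0)"
  proof -
    have "Pow {..<n} \<inter> {X. card X = a \<and> card X = b} = (if a = b then {X \<in> Pow {..<n}. card X = a} else {})"
      by auto
    then show ?thesis by (simp add: sum.If_cases)
  qed
  also have "\<dots> = (if a = b then 1 else 0)"
  proof -
    have "{X \<in> Pow {..<n}. card X = a} = {X. X \<subseteq> {..<n} \<and> card X = a}" by auto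
    then have "card {X \<in> Pow {..<n}. card X = a} = n choose a" using n_subsets[of "{..<n}" a] by simp
    moreover have "real (n choose a) * (1 / sqrt (real (n choose a)))^2 = 1"
      using a by (simp add: power_divide)
    then have "complex_of_nat (n choose a) * c^2 = 1"
      unfolding c_def by (metis of_real_1 of_real_mult of_real_of_nat_eq of_real_power)
    ultimately show ?thesis by (cases "a = b") auto
  qed
  finally show "(cadj ?D * ?D) $$ (a, b) = 1\<^sub>m (n + 1) $$ (a, b)" using a b by simp
qed simp_all

lemma
  assumes "\<sigma> permutes {..<n}" "x < 2^n"
  shows permute_basis_less: "permute_basis n \<sigma> x < 2^n"
    and card_bitset_permute_basis: "card (bitset n (permute_basis n \<sigma> x)) = card (bitset n x)"
proof -
  define c where "c = (\<lambda>i. qbit x (\<sigma> i))"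
  have "\<forall>i. c i \<le> 1" unfolding c_def using qbit_le_1 by blast
  moreover have "permute_basis n \<sigma> x = (\<Sum>i<n. c i * 2^i)" unfolding permute_basis_def c_def ..
  ultimately have digits: "permute_basis n \<sigma> x < 2^n" "\<forall>j<n. qbit (permute_basis n \<sigma> x) j = c j"
    using binary_digits_sum_pow2 by auto
  show "permute_basis n \<sigma> x < 2^n" using digits by simp
  have \<sigma>: "\<sigma> ` {..<n} = {..<n}" using permutes_image[OF assms(1)] .
  then have "bitset n (permute_basis n \<sigma> x) = {j. j < n \<and> \<sigma> j \<in> bitset n x}"
    using digits unfolding bitset_def c_def by auto
  also have "\<dots> = {j \<in> {..<n}. \<sigma> j \<in> bitset n x}" by auto
  finally have eq: "bitset n (permute_basis n \<sigma> x) = {j \<in> {..<n}. \<sigma> j \<in> bitset n x}" .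
  have "\<sigma> ` {j \<in> {..<n}. \<sigma> j \<in> bitset n x} = bitset n x"
  proof
    show "bitset n x \<subseteq> \<sigma> ` {j \<in> {..<n}. \<sigma> j \<in> bitset n x}"
    proof
      fix y assume y: "y \<in> bitset n x"
      then have "y \<in> \<sigma> ` {..<n}" using \<sigma> bitset_subset by blast
      then show "y \<in> \<sigma> ` {j \<in> {..<n}. \<sigma> j \<in> bitset n x}" using y by auto
    qed
  qed auto
  moreover have "inj_on \<sigma> {j \<in> {..<n}. \<sigma> j \<in> bitset n x}"
    using permutes_inj[OF assms(1)] by (auto intro: inj_on_subset)
  ultimately show "card (bitset n (permute_basis n \<sigma> x)) = card (bitset n x)"
    unfolding eq using card_image by metis
qed

lemma perm_vec_dicke_map:
  assumes \<sigma>: "\<sigma> permutes {..<n}" and z: "z \<in> carrier_vec (n+1)"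
  shows "perm_vec n \<sigma> (dicke_map n *\<^sub>v z) = dicke_map n *\<^sub>v z"
proof (rule eq_vecI)
  fix x assume "x < dim_vec (dicke_map n *\<^sub>v z)"
  then have x: "x < 2^n" by simp
  have pb: "permute_basis n \<sigma> x < 2^n" using permute_basis_less[OF \<sigma> x] .
  have "(dicke_map n *\<^sub>v z) $ permute_basis n \<sigma> x = (\<Sum>a<n+1. dicke_map n $$ (permute_basis n \<sigma> x, a) * z $ a)"
    using index_mult_mat_vec_sum[OF dicke_map_carrier z pb] .
  also have "\<dots> = (\<Sum>a<n+1. dicke_map n $$ (x, a) * z $ a)"
    using x pb by (intro sum.cong refl) (simp add: dicke_map_index card_bitset_permute_basis[OF \<sigma> x])
  also have "\<dots> = (dicke_map n *\<^sub>v z) $ x"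
    using index_mult_mat_vec_sum[OF dicke_map_carrier z x] by simp
  finally show "perm_vec n \<sigma> (dicke_map n *\<^sub>v z) $ x = (dicke_map n *\<^sub>v z) $ x"
    unfolding perm_vec_def using x by simp
qed (simp add: perm_vec_def)

lemma perm_invariant_dicke_image:
  assumes "V \<in> carrier_mat (n+1) K"
  shows "perm_invariant_code n (image_mat (dicke_map n * V))"
  unfolding perm_invariant_code_def
proof (intro allI impI ballI)
  fix \<sigma> \<psi> assume \<sigma>: "\<sigma> permutes {..<n}" and "\<psi> \<in> image_mat (dicke_map n * V)"
  then obtain y where y: "y \<in> carrier_vec K" "\<psi> = (dicke_map n * V) *\<^sub>v y"
    using assms unfolding image_mat_def by auto
  then have "\<psi> = dicke_map n *\<^sub>v (V *\<^sub>v y)"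
    using assoc_mult_mat_vec[OF dicke_map_carrier assms y(1)] by simp
  then show "perm_vec n \<sigma> \<psi> = \<psi>" using perm_vec_dicke_map[OF \<sigma>] assms y by simp
qed

section \<open>Intertwining tensor powers with the spin representation\<close>

lemma prod_tensor_entries_Un:
  fixes g :: "'a::comm_monoid_mult mat"
  assumes X: "X \<subseteq> {..<n}" and A: "A \<subseteq> X" and B: "B \<subseteq> {..<n} - X"
  shows "(\<Prod>i<n. g $$ (indicator X i, indicator (A \<union> B) i)) =
    g$$(0,1)^card B * g$$(0,0)^(n - card X - card B) * (g$$(1,1)^card A * g$$(1,0)^(card X - card A))"
proof -
  have fin: "finite X" "finite ({..<n} - X)" using X finite_subset by auto
  have "(\<Prod>i<n. g $$ (indicator X i, indicator (A \<union> B) i)) =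
      (\<Prod>i\<in>{..<n} - X. g $$ (indicator X i, indicator (A \<union> B) i)) *
      (\<Prod>i\<in>X. g $$ (indicator X i, indicator (A \<union> B) i))"
    by (rule prod.subset_diff[OF X finite_lessThan])
  also have "\<dots> = (\<Prod>i\<in>{..<n} - X. (\<lambda>u. g $$ (0, u)) (indicator B i)) *
      (\<Prod>i\<in>X. (\<lambda>u. g $$ (1, u)) (indicator A i))"
    using A B by (intro arg_cong2[where f = "(*)"] prod.cong refl) (auto simp: indicator_def)
  also have "\<dots> = g$$(0,1)^card B * g$$(0,0)^(n - card X - card B) * (g$$(1,1)^card A * g$$(1,0)^(card X - card A))"
    using prod_indicator[OF fin(1) A, of "\<lambda>u. g $$ (1, u)"] prod_indicator[OF fin(2) B, of "\<lambda>u. g $$ (0, u)"] X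
    by (simp add: card_Diff_subset fin)
  finally show ?thesis .
qed

lemma sum_Pow_tensor_entries_card:
  fixes g :: "'a::comm_semiring_1 mat" and c :: 'a
  assumes X: "X \<subseteq> {..<n}"
  defines "b \<equiv> card X"
  shows "(\<Sum>Y\<in>Pow {..<n}. (\<Prod>i<n. g $$ (indicator X i, indicator Y i)) * (if card Y = a then c else 0)) =
    (\<Sum>p\<le>b. if p \<le> a \<and> a - p \<le> n - b then
       of_nat (b choose p) * of_nat ((n - b) choose (a - p)) * c *
       (g$$(1,1)^p * g$$(1,0)^(b - p) * (g$$(0,1)^(a - p) * g$$(0,0)^(n - b - (a - p))))
     else 0)" (is "_ = ?rhs")
proof -
  define H where "H p r = g$$(0,1)^r * g$$(0,0)^(n-b-r) * (g$$(1,1)^p * g$$(1,0)^(b-p)) * (if p + r = a then c else 0)"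
    for p r
  have fX: "finite X" using X finite_subset by blast
  have cnX: "card ({..<n} - X) = n - b" unfolding b_def using X by (simp add: card_Diff_subset fX)
  have "(\<Sum>Y\<in>Pow {..<n}. (\<Prod>i<n. g $$ (indicator X i, indicator Y i)) * (if card Y = a then c else 0)) =
    (\<Sum>A\<in>Pow X. \<Sum>B\<in>Pow ({..<n} - X).
       (\<Prod>i<n. g $$ (indicator X i, indicator (A \<union> B) i)) * (if card (A \<union> B) = a then c else 0))"
    by (rule sum_Pow_Un_split[OF _ X]) simp
  also have "\<dots> = (\<Sum>A\<in>Pow X. \<Sum>B\<in>Pow ({..<n} - X). H (card A) (card B))"
  proof (intro sum.cong refl)
    fix A B assume A: "A \<in> Pow X" and B: "B \<in> Pow ({..<n} - X)"
    have sub: "A \<subseteq> X" "B \<subseteq> {..<n} - X" using A B by auto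
    have "finite A" "finite B" "A \<inter> B = {}" using A B fX by (auto intro: finite_subset)
    then show "(\<Prod>i<n. g $$ (indicator X i, indicator (A \<union> B) i)) * (if card (A \<union> B) = a then c else 0) =
      H (card A) (card B)"
      unfolding H_def b_def prod_tensor_entries_Un[OF X sub] by (simp add: card_Un_disjoint)
  qed
  also have "\<dots> = (\<Sum>A\<in>Pow X. \<Sum>r\<le>n-b. of_nat ((n-b) choose r) * H (card A) r)"
  proof (intro sum.cong refl)
    fix A
    show "(\<Sum>B\<in>Pow ({..<n} - X). H (card A) (card B)) = (\<Sum>r\<le>n-b. of_nat ((n-b) choose r) * H (card A) r)"
      using sum_Pow_card[of "{..<n} - X" "H (card A)"] cnX by simp
  qed
  also have "\<dots> = (\<Sum>p\<le>b. of_nat (b choose p) * (\<Sum>r\<le>n-b. of_nat ((n-b) choose r) * H p r))"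
    using sum_Pow_card[OF fX, of "\<lambda>p. \<Sum>r\<le>n-b. of_nat ((n-b) choose r) * H p r"] unfolding b_def by simp
  also have "\<dots> = ?rhs"
  proof -
    have inner: "(\<Sum>r\<le>n-b. of_nat ((n-b) choose r) * H p r) =
      (if p \<le> a \<and> a - p \<le> n - b then of_nat ((n-b) choose (a-p)) * H p (a-p) else 0)" for p
    proof -
      have "(\<Sum>r\<le>n-b. of_nat ((n-b) choose r) * H p r) =
        (\<Sum>r\<le>n-b. if r = a - p \<and> p \<le> a then of_nat ((n-b) choose r) * H p r else 0)"
        unfolding H_def by (intro sum.cong refl) auto
      then show ?thesis by (auto simp: sum.delta' conj_commute)
    qed
    show ?thesis by (intro sum.cong refl) (unfold inner, simp add: H_def mult_ac)
  qed
  finally show ?thesis .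
qed

lemma wignerD_carrier: "wignerD n g \<in> carrier_mat (n+1) (n+1)"
  unfolding wignerD_def by simp

text \<open>Reindexed by \<open>p = b - k\<close>, the number of factors \<open>y\<close> of the monomial mapped to \<open>y\<close>; on the
  qubit side \<open>p\<close> counts the qubits that are \<open>1\<close> in both basis states.\<close>
lemma wignerD_index:
  assumes "a \<le> n" "b \<le> n"
  shows "wignerD n g $$ (b,a) =
    complex_of_real (sqrt (fact b * fact (n-b) / (fact a * fact (n-a)))) *
    (\<Sum>p\<le>b. if p \<le> a \<and> a - p \<le> n - b then
       of_nat ((n-a) choose (b-p)) * of_nat (a choose p) *
       (g$$(1,1)^p * g$$(1,0)^(b - p) * (g$$(0,1)^(a - p) * g$$(0,0)^(n - b - (a - p))))
     else 0)"
proof -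
  define F where "F = (\<lambda>k. of_nat ((n-a) choose k) * g$$(0,0)^(n-a-k) * g$$(1,0)^k *
    of_nat (a choose (b-k)) * g$$(0,1)^(a-(b-k)) * g$$(1,1)^(b-k))"
  have "(\<Sum>k\<in>{0..n-a}. if k \<le> b \<and> b - k \<le> a then F k else 0) = sum F {k\<in>{0..n-a}. k \<le> b \<and> b - k \<le> a}"
    by (rule sum.inter_filter[symmetric]) simp
  also have "\<dots> = sum (\<lambda>p. F (b - p)) {p\<in>{..b}. p \<le> a \<and> a - p \<le> n - b}"
    by (rule sum.reindex_bij_witness[where i = "\<lambda>k. b - k" and j = "\<lambda>p. b - p"]) (use assms in auto)
  also have "\<dots> = (\<Sum>p\<le>b. if p \<le> a \<and> a - p \<le> n - b then F (b - p) else 0)"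
    by (rule sum.inter_filter) simp
  also have "\<dots> = (\<Sum>p\<le>b. if p \<le> a \<and> a - p \<le> n - b then
       of_nat ((n-a) choose (b-p)) * of_nat (a choose p) *
       (g$$(1,1)^p * g$$(1,0)^(b - p) * (g$$(0,1)^(a - p) * g$$(0,0)^(n - b - (a - p))))
     else 0)"
  proof (intro sum.cong refl if_cong)
    fix p assume p: "p \<in> {..b}" "p \<le> a \<and> a - p \<le> n - b"
    then have "b - (b - p) = p" "n - a - (b - p) = n - b - (a - p)" using assms by auto
    then show "F (b - p) = of_nat ((n-a) choose (b-p)) * of_nat (a choose p) *
       (g$$(1,1)^p * g$$(1,0)^(b - p) * (g$$(0,1)^(a - p) * g$$(0,0)^(n - b - (a - p))))"
      unfolding F_def by (simp add: mult_ac)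
  qed
  finally show ?thesis unfolding wignerD_def F_def using assms by simp
qed

lemma binomial_dicke_wigner_coeff:
  assumes "i \<le> a" "i \<le> b" "a - i \<le> n - b" "a \<le> n" "b \<le> n"
  shows "real (b choose i) * real ((n-b) choose (a-i)) * (1 / sqrt (real (n choose a))) =
    (1 / sqrt (real (n choose b))) * sqrt (fact b * fact (n-b) / (fact a * fact (n-a))) *
    (real ((n-a) choose (b-i)) * real (a choose i))"
proof -
  define P :: real where "P = fact a * fact (n-a)"
  define Q :: real where "Q = fact b * fact (n-b)"
  define N :: real where "N = fact n"
  have P0: "P > 0" and Q0: "Q > 0" and N0: "N > 0" unfolding P_def Q_def N_def by auto
  have ca: "real (n choose a) = N / P" unfolding N_def P_def using assms by (simp add: binomial_fact)
  have cb: "real (n choose b) = N / Q" unfolding N_def Q_def using assms by (simp add: binomial_fact)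
  have "n - b - (a - i) = n - a - (b - i)" using assms by simp
  then have key: "real (b choose i) * real ((n-b) choose (a-i)) * P = Q * (real ((n-a) choose (b-i)) * real (a choose i))"
    unfolding P_def Q_def using assms by (simp add: binomial_fact field_simps)
  have "real (b choose i) * real ((n-b) choose (a-i)) * (1 / sqrt (real (n choose a)))
      = real (b choose i) * real ((n-b) choose (a-i)) * P / (sqrt P * sqrt N)"
    unfolding ca using P0 N0 by (simp add: real_sqrt_divide field_simps)
  also have "\<dots> = Q * (real ((n-a) choose (b-i)) * real (a choose i)) / (sqrt P * sqrt N)"
    using key by simp
  also have "\<dots> = (1 / sqrt (N / Q)) * sqrt (Q / P) * (real ((n-a) choose (b-i)) * real (a choose i))"
    using P0 N0 Q0 by (simp add: real_sqrt_divide field_simps)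
  finally show ?thesis unfolding cb P_def Q_def by simp
qed

lemma tensor_pow_dicke_map_index:
  assumes x: "x < 2^n" and a: "a \<le> n"
  defines "b \<equiv> card (bitset n x)"
  shows "(tensor_pow n g * dicke_map n) $$ (x,a) =
    (\<Sum>p\<le>b. if p \<le> a \<and> a - p \<le> n - b then
       of_nat (b choose p) * of_nat ((n - b) choose (a - p)) * complex_of_real (1 / sqrt (real (n choose a))) *
       (g$$(1,1)^p * g$$(1,0)^(b - p) * (g$$(0,1)^(a - p) * g$$(0,0)^(n - b - (a - p))))
     else 0)"
proof -
  define X where "X = bitset n x"
  define ca where "ca = complex_of_real (1 / sqrt (real (n choose a)))"
  have cT: "tensor_pow n g \<in> carrier_mat (2^n) (2^n)" unfolding tensor_pow_def by (rule tensor_ops_carrier)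
  have "(tensor_pow n g * dicke_map n) $$ (x,a) = (\<Sum>y<2^n. tensor_pow n g $$ (x,y) * dicke_map n $$ (y,a))"
    using index_mult_mat_sum[OF cT dicke_map_carrier x] a by simp
  also have "\<dots> = (\<Sum>y<2^n. (\<lambda>Y. (\<Prod>i<n. g $$ (indicator X i, indicator Y i)) * (if card Y = a then ca else 0)) (bitset n y))"
    using x a by (intro sum.cong refl) (simp add: tensor_pow_def tensor_ops_index dicke_map_index X_def ca_def)
  also have "\<dots> = (\<Sum>Y\<in>Pow {..<n}. (\<Prod>i<n. g $$ (indicator X i, indicator Y i)) * (if card Y = a then ca else 0))"
    by (rule sum_bitset)
  finally show ?thesis
    unfolding b_def ca_def X_def sum_Pow_tensor_entries_card[OF bitset_subset] .
qed

lemma dicke_map_wignerD_index: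
  assumes x: "x < 2^n" and a: "a \<le> n"
  defines "b \<equiv> card (bitset n x)"
  shows "(dicke_map n * wignerD n g) $$ (x,a) = complex_of_real (1 / sqrt (real (n choose b))) * wignerD n g $$ (b,a)"
proof -
  have "(dicke_map n * wignerD n g) $$ (x,a) = (\<Sum>b'<n+1. dicke_map n $$ (x,b') * wignerD n g $$ (b',a))"
    using index_mult_mat_sum[OF dicke_map_carrier wignerD_carrier x] a by simp
  also have "\<dots> = (\<Sum>b'<n+1. if b' = b then complex_of_real (1 / sqrt (real (n choose b))) * wignerD n g $$ (b,a) else 0)"
    using x by (intro sum.cong refl) (auto simp: dicke_map_index b_def)
  finally show ?thesis using card_bitset_le[of n x] unfolding b_def by simp
qed

theorem tensor_pow_dicke_map: "tensor_pow n g * dicke_map n = dicke_map n * wignerD n g"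
proof (rule eq_matI)
  show "dim_row (tensor_pow n g * dicke_map n) = dim_row (dicke_map n * wignerD n g)"
    "dim_col (tensor_pow n g * dicke_map n) = dim_col (dicke_map n * wignerD n g)"
    using tensor_ops_carrier[of n "\<lambda>_. g"] wignerD_carrier[of n g] by (simp_all add: tensor_pow_def)
  fix x a assume "x < dim_row (dicke_map n * wignerD n g)" "a < dim_col (dicke_map n * wignerD n g)"
  then have x: "x < 2^n" and a: "a \<le> n" using wignerD_carrier[of n g] by auto
  define b where "b = card (bitset n x)"
  have b: "b \<le> n" unfolding b_def by (rule card_bitset_le)
  define ca where "ca = complex_of_real (1 / sqrt (real (n choose a)))"
  define cb where "cb = complex_of_real (1 / sqrt (real (n choose b)))"
  define sr where "sr = complex_of_real (sqrt (fact b * fact (n-b) / (fact a * fact (n-a))))"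
  define mono where "mono p = g$$(1,1)^p * g$$(1,0)^(b - p) * (g$$(0,1)^(a - p) * g$$(0,0)^(n - b - (a - p)))"
    for p
  have "(if p \<le> a \<and> a - p \<le> n - b then of_nat (b choose p) * of_nat ((n - b) choose (a - p)) * ca * mono p else 0) =
      cb * (sr * (if p \<le> a \<and> a - p \<le> n - b then of_nat ((n-a) choose (b-p)) * of_nat (a choose p) * mono p else 0))"
    if "p \<le> b" for p
  proof -
    have "of_nat (b choose p) * of_nat ((n - b) choose (a - p)) * ca =
        cb * sr * (of_nat ((n-a) choose (b-p)) * of_nat (a choose p))" if "p \<le> a" "a - p \<le> n - b"
      using arg_cong[OF binomial_dicke_wigner_coeff[OF that(1) \<open>p \<le> b\<close> that(2) a b], of complex_of_real]
      unfolding ca_def cb_def sr_def by simp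
    then show ?thesis by (simp add: mult.assoc)
  qed
  then show "(tensor_pow n g * dicke_map n) $$ (x,a) = (dicke_map n * wignerD n g) $$ (x,a)"
    unfolding tensor_pow_dicke_map_index[OF x a] dicke_map_wignerD_index[OF x a] wignerD_index[OF a b]
      b_def[symmetric] sum_distrib_left mono_def[symmetric] ca_def[symmetric] cb_def[symmetric] sr_def[symmetric]
    by (intro sum.cong refl) simp
qed

section \<open>Spherical tensors along their diagonals\<close>

definition falling_fact :: "real \<Rightarrow> nat \<Rightarrow> real" where
  "falling_fact x e = (\<Prod>i<e. x - real i)"

lemma falling_fact_Suc: "falling_fact x (Suc e) = falling_fact x e * (x - real e)"
  unfolding falling_fact_def by simp

lemma falling_fact_of_nat: "falling_fact (real u) e = (if e \<le> u then fact u / fact (u - e) else 0)"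
proof (induction e)
  case 0
  then show ?case by (simp add: falling_fact_def)
next
  case (Suc e)
  show ?case
  proof (cases "Suc e \<le> u")
    case True
    then have "u - e = Suc (u - Suc e)" by simp
    then have f: "fact (u - e) = real (u - e) * fact (u - Suc e)" by simp
    have "real u - real e = real (u - e)" using True by simp
    then show ?thesis using Suc True f by (simp add: falling_fact_Suc field_simps)
  next
    case False
    show ?thesis
    proof (cases "e = u")
      case True
      then show ?thesis by (simp add: falling_fact_Suc)
    next
      case False
      then show ?thesis using Suc \<open>\<not> Suc e \<le> u\<close> by (simp add: falling_fact_Suc)
    qed
  qed
qed

lemma falling_fact_of_nat_div_fact: "falling_fact (real u) e / fact u = (if e \<le> u then 1 / fact (u - e) else 0)"
  by (simp add: falling_fact_of_nat)

definition falling_fact_poly :: "nat \<Rightarrow> real poly" where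
  "falling_fact_poly e = (\<Prod>i<e. [:- real i, 1:])"

definition falling_fact_poly_refl :: "nat \<Rightarrow> nat \<Rightarrow> real poly" where
  "falling_fact_poly_refl N e = (\<Prod>i<e. [:real N - real i, -1:])"

lemma poly_falling_fact_poly: "poly (falling_fact_poly e) x = falling_fact x e"
  unfolding falling_fact_poly_def falling_fact_def poly_prod by simp

lemma poly_falling_fact_poly_refl: "poly (falling_fact_poly_refl N e) x = falling_fact (real N - x) e"
  unfolding falling_fact_poly_refl_def falling_fact_def poly_prod by (simp add: algebra_simps)

lemma degree_falling_fact_poly: "degree (falling_fact_poly e) = e"
  unfolding falling_fact_poly_def by (subst degree_prod_eq_sum_degree) auto

lemma coeff_falling_fact_poly: "coeff (falling_fact_poly e) e = 1"
  using lead_coeff_prod[of "\<lambda>i. [:- real i, 1:]" "{..<e}"] degree_falling_fact_poly[of e] unfolding falling_fact_poly_def by simp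

lemma degree_falling_fact_poly_refl: "degree (falling_fact_poly_refl N e) = e"
  unfolding falling_fact_poly_refl_def by (subst degree_prod_eq_sum_degree) auto

lemma coeff_falling_fact_poly_refl: "coeff (falling_fact_poly_refl N e) e = (-1)^e"
  using lead_coeff_prod[of "\<lambda>i. [:real N - real i, -1:]" "{..<e}"] degree_falling_fact_poly_refl[of N e] unfolding falling_fact_poly_refl_def by simp

lemma poly_in_span_of_degree_basis:
  fixes P :: "nat \<Rightarrow> 'a::field poly"
  assumes "\<forall>i\<le>D. degree (P i) \<le> i \<and> coeff (P i) i \<noteq> 0" "degree f \<le> D"
  shows "\<exists>\<beta>. f = (\<Sum>i\<le>D. Polynomial.smult (\<beta> i) (P i))"
  using assms
proof (induction D arbitrary: f)
  case 0
  then have deg: "degree (P 0) = 0" "degree f = 0" and nz: "coeff (P 0) 0 \<noteq> 0" by auto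
  define c where "c = coeff f 0 / coeff (P 0) 0"
  have "coeff f j = coeff (Polynomial.smult c (P 0)) j" for j
    using deg nz unfolding c_def by (cases j) (simp_all add: coeff_eq_0)
  then have "f = Polynomial.smult c (P 0)" by (rule poly_eqI)
  then show ?case by (intro exI[of _ "\<lambda>_. c"]) simp
next
  case (Suc D)
  define c where "c = coeff f (Suc D) / coeff (P (Suc D)) (Suc D)"
  define f' where "f' = f - Polynomial.smult c (P (Suc D))"
  have P: "degree (P (Suc D)) \<le> Suc D" "coeff (P (Suc D)) (Suc D) \<noteq> 0" using Suc.prems by auto
  have high: "coeff f' i = 0" if "i > D" for i
  proof (cases "i = Suc D")
    case True
    then show ?thesis unfolding f'_def c_def using P by simp
  next
    case False
    then have "i > degree f" "i > degree (P (Suc D))" using that P Suc.prems by auto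
    then show ?thesis unfolding f'_def by (simp add: coeff_eq_0)
  qed
  have "degree f' \<le> D" by (rule degree_le) (use high in blast)
  then obtain \<beta> where "f' = (\<Sum>i\<le>D. Polynomial.smult (\<beta> i) (P i))" using Suc by auto
  then have "f = (\<Sum>i\<le>Suc D. Polynomial.smult ((\<beta>(Suc D := c)) i) (P i))"
    unfolding f'_def by (simp add: algebra_simps)
  then show ?case by blast
qed

lemma hfact_eq_fact: "z = 2 * int x \<Longrightarrow> hfact z = fact x"
  unfolding hfact_def by simp

definition racah_norm :: "nat \<Rightarrow> nat \<Rightarrow> real" where
  "racah_norm n l = real (n + 1) * fact l * fact (n - l) * fact l / fact (l + n + 1)"

definition racah_term :: "nat \<Rightarrow> nat \<Rightarrow> nat \<Rightarrow> nat \<Rightarrow> real" where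
  "racah_term l p m \<kappa> = (-1)^\<kappa> / (fact \<kappa> * fact (l - \<kappa>) * fact (l + m - p - \<kappa>) * fact (p + \<kappa> - m))"

lemma racah_norm_pos: "l \<le> n \<Longrightarrow> racah_norm n l > 0"
  unfolding racah_norm_def by simp

text \<open>Racah's formula for \<open>C^{j, j-b}_{l q, j, j-a}\<close> on the diagonal \<open>a = u + p\<close>, \<open>b = u + m\<close>,
  \<open>q = p - m\<close> (one of \<open>p\<close>, \<open>m\<close> is zero), in the doubled-argument convention of \<open>cg\<close>.
  Written with falling factorials in \<open>u\<close>, it becomes a polynomial in the index \<open>u\<close>.\<close>
context
  fixes n l p m u :: nat and tj1 tm1 tj2 tm2 tJ tM :: int
  assumes pm: "p = 0 \<or> m = 0" "p + m \<le> l" "l \<le> n" "u + p + m \<le> n"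
    and t: "tj1 = 2 * int l" "tm1 = 2 * (int p - int m)" "tj2 = int n" "tm2 = int n - 2 * int (u + p)"
      "tJ = int n" "tM = int n - 2 * int (u + p) + 2 * (int p - int m)"
begin

lemma cg_diag_admissible:
  "0 \<le> tj1 \<and> 0 \<le> tj2 \<and> 0 \<le> tJ \<and> \<bar>tm1\<bar> \<le> tj1 \<and> \<bar>tm2\<bar> \<le> tj2 \<and> \<bar>tM\<bar> \<le> tJ \<and>
   even (tj1 - tm1) \<and> even (tj2 - tm2) \<and> even (tJ - tM) \<and>
   \<bar>tj1 - tj2\<bar> \<le> tJ \<and> tJ \<le> tj1 + tj2 \<and> even (tj1 + tj2 + tJ) \<and> tM = tm1 + tm2"
proof -
  have "tj1 - tm1 = 2 * (int l - int p + int m)" "tj2 - tm2 = 2 * int (u + p)"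
    "tJ - tM = 2 * (int (u + p) - int p + int m)" "tj1 + tj2 + tJ = 2 * (int l + int n)"
    using t by simp_all
  then show ?thesis using t pm by auto
qed

lemma racah_summand_diag:
  "(let tk = 2 * int \<kappa> in
      if 0 \<le> tj1 + tj2 - tJ - tk \<and> 0 \<le> tj1 - tm1 - tk \<and> 0 \<le> tj2 + tm2 - tk \<and>
         0 \<le> tJ - tj2 + tm1 + tk \<and> 0 \<le> tJ - tj1 - tm2 + tk
      then (-1) ^ \<kappa> / (fact \<kappa> * hfact (tj1 + tj2 - tJ - tk) * hfact (tj1 - tm1 - tk) *
             hfact (tj2 + tm2 - tk) * hfact (tJ - tj2 + tm1 + tk) * hfact (tJ - tj1 - tm2 + tk))
      else 0) =
   (if \<kappa> \<in> {m..l-p} then racah_term l p m \<kappa> *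
      (falling_fact (real u) (l - \<kappa> - p) * falling_fact (real (n - u - p - m)) (\<kappa> - m)) /
      (fact u * fact (n - u - p - m))
    else 0)"
proof (cases "\<kappa> \<in> {m..l-p}")
  case False
  then have "\<not> (0 \<le> tj1 + tj2 - tJ - 2 * int \<kappa> \<and> 0 \<le> tj1 - tm1 - 2 * int \<kappa> \<and> 0 \<le> tJ - tj2 + tm1 + 2 * int \<kappa>)"
    using t pm by auto
  then show ?thesis using False by (auto simp: Let_def)
next
  case True
  then have k: "m \<le> \<kappa>" "\<kappa> + p \<le> l" using pm by auto
  define v where "v = n - u - p - m"
  show ?thesis
  proof (cases "l - \<kappa> - p \<le> u \<and> \<kappa> - m \<le> v")
    case False
    then have "\<not> (0 \<le> tj2 + tm2 - 2 * int \<kappa> \<and> 0 \<le> tJ - tj1 - tm2 + 2 * int \<kappa>)"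
      using t pm k unfolding v_def by auto
    then show ?thesis using True False by (auto simp: Let_def falling_fact_of_nat v_def)
  next
    case True
    have "0 \<le> tj1 + tj2 - tJ - 2 * int \<kappa> \<and> 0 \<le> tj1 - tm1 - 2 * int \<kappa> \<and> 0 \<le> tj2 + tm2 - 2 * int \<kappa> \<and>
        0 \<le> tJ - tj2 + tm1 + 2 * int \<kappa> \<and> 0 \<le> tJ - tj1 - tm2 + 2 * int \<kappa>"
      using t pm k True unfolding v_def by auto
    moreover have "hfact (tj1 + tj2 - tJ - 2 * int \<kappa>) = fact (l - \<kappa>)"
      "hfact (tj1 - tm1 - 2 * int \<kappa>) = fact (l + m - p - \<kappa>)"
      "hfact (tj2 + tm2 - 2 * int \<kappa>) = fact (v - (\<kappa> - m))"
      "hfact (tJ - tj2 + tm1 + 2 * int \<kappa>) = fact (p + \<kappa> - m)"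
      "hfact (tJ - tj1 - tm2 + 2 * int \<kappa>) = fact (u - (l - \<kappa> - p))"
      by (rule hfact_eq_fact; use t k pm True in \<open>auto simp: v_def\<close>)+
    moreover have "racah_term l p m \<kappa> * (falling_fact (real u) (l - \<kappa> - p) * falling_fact (real v) (\<kappa> - m)) /
        (fact u * fact v) = (-1) ^ \<kappa> / (fact \<kappa> * fact (l - \<kappa>) * fact (l + m - p - \<kappa>) *
        fact (v - (\<kappa> - m)) * fact (p + \<kappa> - m) * fact (u - (l - \<kappa> - p)))"
      unfolding racah_term_def using True by (simp add: falling_fact_of_nat field_simps)
    ultimately show ?thesis using \<open>\<kappa> \<in> {m..l-p}\<close> by (simp add: Let_def v_def)
  qed
qed

lemma racah_sum_diag:
  "(\<Sum>\<kappa>\<in>{0..nat (tj1 + tj2 + tJ)}.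
      let tk = 2 * int \<kappa> in
      if 0 \<le> tj1 + tj2 - tJ - tk \<and> 0 \<le> tj1 - tm1 - tk \<and> 0 \<le> tj2 + tm2 - tk \<and>
         0 \<le> tJ - tj2 + tm1 + tk \<and> 0 \<le> tJ - tj1 - tm2 + tk
      then (-1) ^ \<kappa> / (fact \<kappa> * hfact (tj1 + tj2 - tJ - tk) * hfact (tj1 - tm1 - tk) *
             hfact (tj2 + tm2 - tk) * hfact (tJ - tj2 + tm1 + tk) * hfact (tJ - tj1 - tm2 + tk))
      else 0) =
   (\<Sum>\<kappa>\<in>{m..l-p}. racah_term l p m \<kappa> *
      (falling_fact (real u) (l - \<kappa> - p) * falling_fact (real (n - u - p - m)) (\<kappa> - m)) /
      (fact u * fact (n - u - p - m)))"
proof -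
  have "{0..nat (tj1 + tj2 + tJ)} \<inter> {m..l-p} = {m..l-p}" using t by auto
  then show ?thesis
    by (simp only: racah_summand_diag sum.inter_restrict[OF finite_atLeastAtMost, symmetric])
qed

lemma cg_diag:
  "cg tj1 tm1 tj2 tm2 tJ tM =
    sqrt (racah_norm n l) *
    sqrt (fact (n - (u + m)) * fact (u + m) * fact (l + m - p) * fact (l + p - m) * fact (u + p) * fact (n - (u + p))) *
    (\<Sum>\<kappa>\<in>{m..l-p}. racah_term l p m \<kappa> *
      (falling_fact (real u) (l - \<kappa> - p) * falling_fact (real (n - u - p - m)) (\<kappa> - m)) /
      (fact u * fact (n - u - p - m)))"
proof -
  have "hfact (tJ + tj1 - tj2) = fact l" "hfact (tJ - tj1 + tj2) = fact (n - l)" "hfact (tj1 + tj2 - tJ) = fact l"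
    "hfact (tj1 + tj2 + tJ + 2) = fact (l + n + 1)"
    by (rule hfact_eq_fact; use t pm in simp)+
  moreover have "real_of_int tJ + 1 = real (n + 1)" using t by simp
  ultimately have A: "sqrt ((real_of_int tJ + 1) * hfact (tJ + tj1 - tj2) * hfact (tJ - tj1 + tj2) *
      hfact (tj1 + tj2 - tJ) / hfact (tj1 + tj2 + tJ + 2)) = sqrt (racah_norm n l)"
    unfolding racah_norm_def by simp
  have "hfact (tJ + tM) = fact (n - (u + m))" "hfact (tJ - tM) = fact (u + m)"
    "hfact (tj1 - tm1) = fact (l + m - p)" "hfact (tj1 + tm1) = fact (l + p - m)"
    "hfact (tj2 - tm2) = fact (u + p)" "hfact (tj2 + tm2) = fact (n - (u + p))"
    by (rule hfact_eq_fact; use t pm in auto)+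
  then have B: "sqrt (hfact (tJ + tM) * hfact (tJ - tM) * hfact (tj1 - tm1) * hfact (tj1 + tm1) *
      hfact (tj2 - tm2) * hfact (tj2 + tm2)) =
    sqrt (fact (n - (u + m)) * fact (u + m) * fact (l + m - p) * fact (l + p - m) * fact (u + p) * fact (n - (u + p)))"
    by simp
  show ?thesis unfolding cg_def if_P[OF cg_diag_admissible] A B racah_sum_diag ..
qed

end

definition sph_entry :: "nat \<Rightarrow> nat \<Rightarrow> int \<Rightarrow> nat \<Rightarrow> nat \<Rightarrow> real" where
  "sph_entry n k q b a = (if int b = int a - q then
       sqrt ((2 * real k + 1) / (real n + 1)) *
         cg (2 * int k) (2 * q) (int n) (int n - 2 * int a) (int n) (int n - 2 * int a + 2 * q)
     else 0)"

lemma sph_tensor_index: "a \<le> n \<Longrightarrow> b \<le> n \<Longrightarrow> sph_tensor n k q $$ (b,a) = complex_of_real (sph_entry n k q b a)"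
  unfolding sph_tensor_def sph_entry_def by simp

definition sph_diag_poly :: "nat \<Rightarrow> nat \<Rightarrow> nat \<Rightarrow> nat \<Rightarrow> real poly" where
  "sph_diag_poly n l p m = (\<Sum>\<kappa>\<in>{m..l-p}. Polynomial.smult (racah_term l p m \<kappa>) (falling_fact_poly (l - \<kappa> - p) * falling_fact_poly_refl (n - p - m) (\<kappa> - m)))"

definition sph_diag_const :: "nat \<Rightarrow> nat \<Rightarrow> nat \<Rightarrow> nat \<Rightarrow> real" where
  "sph_diag_const n l p m = sqrt ((2 * real l + 1) / (real n + 1)) * sqrt (racah_norm n l) * sqrt (fact (l + m - p) * fact (l + p - m))"

definition fact_norm :: "nat \<Rightarrow> nat \<Rightarrow> nat \<Rightarrow> real" where
  "fact_norm n a b = sqrt (fact (n - b) * fact b * fact a * fact (n - a))"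

lemma sph_diag_const_pos: "l \<le> n \<Longrightarrow> sph_diag_const n l p m > 0"
  unfolding sph_diag_const_def using racah_norm_pos by (simp add: add_pos_pos)

lemma poly_sph_diag_poly: "u + p + m \<le> n \<Longrightarrow> poly (sph_diag_poly n l p m) (real u) =
   (\<Sum>\<kappa>\<in>{m..l-p}. racah_term l p m \<kappa> * (falling_fact (real u) (l - \<kappa> - p) * falling_fact (real (n - u - p - m)) (\<kappa> - m)))"
proof -
  assume a: "u + p + m \<le> n"
  have e: "real (n - (p + m)) - real u = real (n - (u + p + m))" using a by simp
  show ?thesis unfolding sph_diag_poly_def by (simp add: poly_sum poly_falling_fact_poly poly_falling_fact_poly_refl e)
qed

lemma sph_entry_diag:
  assumes pm: "p = 0 \<or> m = 0" "p + m \<le> l" "l \<le> n" "u + p + m \<le> n"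
  shows "sph_entry n l (int p - int m) (u + m) (u + p) =
    sph_diag_const n l p m * fact_norm n (u + p) (u + m) / (fact u * fact (n - u - p - m)) * poly (sph_diag_poly n l p m) (real u)"
proof -
  have cgv: "cg (2 * int l) (2 * (int p - int m)) (int n) (int n - 2 * int (u + p)) (int n) (int n - 2 * int (u + p) + 2 * (int p - int m)) =
    sqrt (racah_norm n l) * sqrt (fact (n - (u + m)) * fact (u + m) * fact (l + m - p) * fact (l + p - m) * fact (u + p) * fact (n - (u + p))) *
    (\<Sum>\<kappa>\<in>{m..l-p}. racah_term l p m \<kappa> * (falling_fact (real u) (l - \<kappa> - p) * falling_fact (real (n - u - p - m)) (\<kappa> - m)) / (fact u * fact (n - u - p - m)))"
    by (rule cg_diag[OF pm]) simp_all
  have sq: "sqrt (fact (n - (u + m)) * fact (u + m) * fact (l + m - p) * fact (l + p - m) * fact (u + p) * fact (n - (u + p)) :: real) =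
      sqrt (fact (l + m - p) * fact (l + p - m)) * fact_norm n (u + p) (u + m)"
    unfolding fact_norm_def by (simp add: real_sqrt_mult[symmetric] mult_ac)
  have "sph_entry n l (int p - int m) (u + m) (u + p) = sqrt ((2 * real l + 1) / (real n + 1)) *
    cg (2 * int l) (2 * (int p - int m)) (int n) (int n - 2 * int (u + p)) (int n) (int n - 2 * int (u + p) + 2 * (int p - int m))"
    unfolding sph_entry_def by simp
  also have "\<dots> = sph_diag_const n l p m * fact_norm n (u + p) (u + m) / (fact u * fact (n - u - p - m)) * poly (sph_diag_poly n l p m) (real u)"
    unfolding cgv sq poly_sph_diag_poly[OF pm(4)] sph_diag_const_def by (simp add: sum_divide_distrib[symmetric] field_simps)
  finally show ?thesis .
qed

lemma degree_sph_diag_poly: "degree (sph_diag_poly n l p m) \<le> l - p - m"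
  unfolding sph_diag_poly_def
proof (rule degree_sum_le)
  fix \<kappa> assume k: "\<kappa> \<in> {m..l-p}"
  have "degree (falling_fact_poly (l - \<kappa> - p) * falling_fact_poly_refl (n - p - m) (\<kappa> - m)) \<le> (l - \<kappa> - p) + (\<kappa> - m)"
    using degree_mult_le[of "falling_fact_poly (l - \<kappa> - p)" "falling_fact_poly_refl (n - p - m) (\<kappa> - m)"] degree_falling_fact_poly degree_falling_fact_poly_refl by simp
  also have "\<dots> = l - p - m" using k by auto
  finally show "degree (Polynomial.smult (racah_term l p m \<kappa>) (falling_fact_poly (l - \<kappa> - p) * falling_fact_poly_refl (n - p - m) (\<kappa> - m))) \<le> l - p - m"
    by (meson degree_smult_le order_trans)
qed simp

lemma coeff_sph_diag_poly_nonzero: assumes "p + m \<le> l" shows "coeff (sph_diag_poly n l p m) (l - p - m) \<noteq> 0"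
proof -
  have "coeff (sph_diag_poly n l p m) (l - p - m) = (\<Sum>\<kappa>\<in>{m..l-p}. racah_term l p m \<kappa> * (-1)^(\<kappa> - m))"
    unfolding sph_diag_poly_def coeff_sum
  proof (intro sum.cong refl)
    fix \<kappa> assume k: "\<kappa> \<in> {m..l-p}"
    have e: "l - p - m = degree (falling_fact_poly (l - \<kappa> - p)) + degree (falling_fact_poly_refl (n - p - m) (\<kappa> - m))"
      using k by (auto simp: degree_falling_fact_poly degree_falling_fact_poly_refl)
    show "coeff (Polynomial.smult (racah_term l p m \<kappa>) (falling_fact_poly (l - \<kappa> - p) * falling_fact_poly_refl (n - p - m) (\<kappa> - m))) (l - p - m) = racah_term l p m \<kappa> * (-1)^(\<kappa> - m)"
      unfolding coeff_smult e coeff_mult_degree_sum by (simp add: degree_falling_fact_poly degree_falling_fact_poly_refl coeff_falling_fact_poly coeff_falling_fact_poly_refl)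
  qed
  also have "\<dots> = (\<Sum>\<kappa>\<in>{m..l-p}. (-1)^m * (1 / (fact \<kappa> * fact (l - \<kappa>) * fact (l + m - p - \<kappa>) * fact (p + \<kappa> - m))))"
  proof (intro sum.cong refl)
    fix \<kappa> assume k: "\<kappa> \<in> {m..l-p}"
    then have "\<kappa> = m + (\<kappa> - m)" by auto
    then have "(-1::real)^\<kappa> * (-1)^(\<kappa> - m) = (-1)^m * ((-1)^(\<kappa> - m) * (-1)^(\<kappa> - m))"
      by (metis mult.assoc power_add)
    also have "\<dots> = (-1)^m" by (simp add: power_mult_distrib[symmetric])
    finally have "(-1::real)^\<kappa> * (-1)^(\<kappa> - m) = (-1)^m" .
    then show "racah_term l p m \<kappa> * (-1)^(\<kappa> - m) = (-1)^m * (1 / (fact \<kappa> * fact (l - \<kappa>) * fact (l + m - p - \<kappa>) * fact (p + \<kappa> - m)))"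
      unfolding racah_term_def by (simp add: field_simps)
  qed
  also have "\<dots> = (-1)^m * (\<Sum>\<kappa>\<in>{m..l-p}. 1 / (fact \<kappa> * fact (l - \<kappa>) * fact (l + m - p - \<kappa>) * fact (p + \<kappa> - m)))"
    by (simp add: sum_distrib_left)
  finally have eq: "coeff (sph_diag_poly n l p m) (l - p - m) = (-1)^m * (\<Sum>\<kappa>\<in>{m..l-p}. 1 / (fact \<kappa> * fact (l - \<kappa>) * fact (l + m - p - \<kappa>) * fact (p + \<kappa> - m)))" .
  have "(\<Sum>\<kappa>\<in>{m..l-p}. 1 / (fact \<kappa> * fact (l - \<kappa>) * fact (l + m - p - \<kappa>) * fact (p + \<kappa> - m) :: real)) > 0"
    by (rule sum_pos) (use assms in auto)
  then show ?thesis unfolding eq by simp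
qed

section \<open>Compressions of local operators to the symmetric subspace\<close>

text \<open>\<open>sym_block n w s t\<close> is the compression \<open>\<D>\<^sup>\<dagger> (|X\<rangle>\<langle>Y| \<otimes> 1) \<D>\<close> to the spin-\<open>n/2\<close>
  space, where \<open>X, Y\<close> are subsets of a set \<open>S\<close> of \<open>w\<close> qubits with \<open>|X| = s\<close>, \<open>|Y| = t\<close>, and
  \<open>1\<close> is the identity on the other \<open>n - w\<close> qubits.\<close>
definition sym_block :: "nat \<Rightarrow> nat \<Rightarrow> nat \<Rightarrow> nat \<Rightarrow> nat \<Rightarrow> nat \<Rightarrow> real" where
  "sym_block n w s t b a = (if b + t = a + s \<and> t \<le> a then real ((n - w) choose (a - t)) / sqrt (real (n choose b) * real (n choose a)) else 0)"

lemma inv_sqrt_binom_mult: assumes "a \<le> n" "b \<le> n"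
  shows "1 / sqrt (real (n choose b) * real (n choose a)) = fact_norm n a b / fact n"
proof -
  define X :: real where "X = fact (n - b) * fact b * fact a * fact (n - a)"
  have X0: "X > 0" unfolding X_def by simp
  have "real (n choose b) * real (n choose a) = fact n * fact n / X"
    unfolding X_def using assms by (simp add: binomial_fact field_simps)
  then have "sqrt (real (n choose b) * real (n choose a)) = fact n / sqrt X"
    using X0 by (simp add: real_sqrt_divide real_sqrt_mult)
  then show ?thesis unfolding fact_norm_def X_def[symmetric] using X0 by simp
qed

lemma sym_block_diag:
  assumes pm: "p = t - s" "m = s - t" and st: "s \<le> w" "t \<le> w" "w \<le> n" and u: "u + p + m \<le> n"
  shows "sym_block n w s t (u + m) (u + p) = fact_norm n (u + p) (u + m) / fact n * fact (n - w) *
      poly (falling_fact_poly (t - p) * falling_fact_poly_refl (n - p - m) (w - t - m)) (real u) / (fact u * fact (n - u - p - m))"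
proof -
  define a where "a = u + p"
  define v where "v = n - u - p - m"
  have diag: "u + m + t = a + s" unfolding a_def using pm by auto
  have ev: "real (n - (p + m)) - real u = real v" unfolding v_def using u by simp
  have f1: "falling_fact (real u) (t - p) / fact u = (if t \<le> a then 1 / fact (a - t) else 0)"
    unfolding falling_fact_of_nat_div_fact a_def using pm by auto
  have f2: "t \<le> a \<Longrightarrow> falling_fact (real v) (w - t - m) / fact v = (if a - t \<le> n - w then 1 / fact (n - w - (a - t)) else 0)"
  proof -
    assume ta: "t \<le> a"
    have "(w - t - m \<le> v) = (a - t \<le> n - w)" unfolding v_def a_def using pm st u ta[unfolded a_def] by arith
    moreover have "v - (w - t - m) = n - w - (a - t)" unfolding v_def a_def using pm st u ta[unfolded a_def] by arith
    ultimately show ?thesis unfolding falling_fact_of_nat_div_fact by simp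
  qed
  have "sym_block n w s t (u + m) (u + p) = (if t \<le> a then real ((n - w) choose (a - t)) else 0) * (fact_norm n a (u + m) / fact n)"
    unfolding sym_block_def a_def[symmetric] using diag inv_sqrt_binom_mult[of a n "u + m"] u unfolding a_def
    by (auto simp: divide_inverse)
  also have "\<dots> = fact_norm n a (u + m) / fact n * fact (n - w) * ((falling_fact (real u) (t - p) / fact u) * (falling_fact (real v) (w - t - m) / fact v))"
  proof (cases "t \<le> a")
    case True
    show ?thesis
    proof (cases "a - t \<le> n - w")
      case True2: True
      have Cv: "real ((n - w) choose (a - t)) = fact (n - w) / (fact (a - t) * fact (n - w - (a - t)))"
        using True2 by (simp add: binomial_fact)
      have e1: "falling_fact (real u) (t - p) / fact u = 1 / fact (a - t)" using f1 True by simp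
      have e2: "falling_fact (real v) (w - t - m) / fact v = 1 / fact (n - w - (a - t))" using f2[OF True] True2 by simp
      show ?thesis unfolding e1 e2 using True by (simp add: Cv mult_ac)
    next
      case False
      then show ?thesis using True f1 f2[OF True] by (simp add: binomial_eq_0)
    qed
  next
    case False
    then show ?thesis using f1 by simp
  qed
  also have "\<dots> = fact_norm n (u + p) (u + m) / fact n * fact (n - w) *
      poly (falling_fact_poly (t - p) * falling_fact_poly_refl (n - p - m) (w - t - m)) (real u) / (fact u * fact (n - u - p - m))"
    unfolding a_def v_def[symmetric] by (simp add: poly_falling_fact_poly poly_falling_fact_poly_refl ev)
  finally show ?thesis .
qed

lemma sym_block_poly_in_sph_span:
  assumes pm: "p = t - s" "m = s - t" and st: "s \<le> w" "t \<le> w"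
  shows "\<exists>\<beta>. falling_fact_poly (t - p) * falling_fact_poly_refl (n - p - m) (w - t - m) =
    (\<Sum>l\<in>{p+m..w}. Polynomial.smult (\<beta> l) (sph_diag_poly n l p m))"
proof -
  define P where "P i = sph_diag_poly n (p + m + i) p m" for i
  have "\<forall>i\<le>w - p - m. degree (P i) \<le> i \<and> coeff (P i) i \<noteq> 0"
  proof (intro allI impI conjI)
    fix i
    show "degree (P i) \<le> i" unfolding P_def using degree_sph_diag_poly[of n "p + m + i" p m] by simp
    show "coeff (P i) i \<noteq> 0" unfolding P_def using coeff_sph_diag_poly_nonzero[of p m "p + m + i" n] by simp
  qed
  moreover have "degree (falling_fact_poly (t - p) * falling_fact_poly_refl (n - p - m) (w - t - m)) \<le> w - p - m"
    using degree_mult_le[of "falling_fact_poly (t - p)" "falling_fact_poly_refl (n - p - m) (w - t - m)"] pm st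
    by (simp add: degree_falling_fact_poly degree_falling_fact_poly_refl)
  ultimately obtain \<beta> where \<beta>: "falling_fact_poly (t - p) * falling_fact_poly_refl (n - p - m) (w - t - m) =
      (\<Sum>i\<le>w - p - m. Polynomial.smult (\<beta> i) (P i))"
    using poly_in_span_of_degree_basis by blast
  also have "\<dots> = (\<Sum>l\<in>{p+m..w}. Polynomial.smult (\<beta> (l - p - m)) (sph_diag_poly n l p m))"
    unfolding P_def
    by (rule sum.reindex_bij_witness[where i = "\<lambda>l. l - p - m" and j = "\<lambda>i. p + m + i"]) (use pm st in \<open>auto intro: diff_le_mono\<close>)
  finally show ?thesis by (rule exI[where x = "\<lambda>l. \<beta> (l - p - m)"])
qed

lemma sym_block_in_sph_span:
  assumes st: "s \<le> w" "t \<le> w" "w \<le> n"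
  shows "\<exists>\<alpha>. \<forall>b a. b \<le> n \<longrightarrow> a \<le> n \<longrightarrow>
     sym_block n w s t b a = (\<Sum>l\<in>{(t-s)+(s-t)..w}. \<alpha> l * sph_entry n l (int t - int s) b a)"
proof -
  define p where "p = t - s"
  define m where "m = s - t"
  have pm0: "p = 0 \<or> m = 0" unfolding p_def m_def by auto
  have q: "int t - int s = int p - int m" unfolding p_def m_def by auto
  obtain \<beta> where \<beta>: "falling_fact_poly (t - p) * falling_fact_poly_refl (n - p - m) (w - t - m) =
      (\<Sum>l\<in>{p+m..w}. Polynomial.smult (\<beta> l) (sph_diag_poly n l p m))"
    using sym_block_poly_in_sph_span[OF p_def m_def st(1,2)] by blast
  define \<alpha> where "\<alpha> l = \<beta> l * fact (n - w) / (fact n * sph_diag_const n l p m)" for l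
  have "sym_block n w s t b a = (\<Sum>l\<in>{p+m..w}. \<alpha> l * sph_entry n l (int t - int s) b a)"
    if b: "b \<le> n" and a: "a \<le> n" for b a
  proof (cases "b + t = a + s")
    case False
    then have "\<And>l. sph_entry n l (int t - int s) b a = 0" unfolding sph_entry_def by auto
    moreover have "sym_block n w s t b a = 0" unfolding sym_block_def using False by simp
    ultimately show ?thesis by simp
  next
    case True
    define u where "u = a - p"
    have au: "a = u + p" and bu: "b = u + m" unfolding u_def p_def m_def using True by auto
    have upm: "u + p + m \<le> n" using a b au bu pm0 by auto
    define C where "C = fact_norm n (u + p) (u + m) / (fact u * fact (n - u - p - m)) * (fact (n - w) / fact n)"
    have "sym_block n w s t b a = C * poly (falling_fact_poly (t - p) * falling_fact_poly_refl (n - p - m) (w - t - m)) (real u)"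
      unfolding au bu sym_block_diag[OF p_def m_def st upm] C_def by simp
    also have "\<dots> = (\<Sum>l\<in>{p+m..w}. C * (\<beta> l * poly (sph_diag_poly n l p m) (real u)))"
      unfolding \<beta> by (simp add: poly_sum sum_distrib_left)
    also have "\<dots> = (\<Sum>l\<in>{p+m..w}. \<alpha> l * sph_entry n l (int t - int s) b a)"
    proof (intro sum.cong refl)
      fix l assume "l \<in> {p+m..w}"
      then have l: "l \<le> n" "p + m \<le> l" using st by auto
      have "sph_entry n l (int t - int s) b a = sph_diag_const n l p m * fact_norm n (u + p) (u + m) /
          (fact u * fact (n - u - p - m)) * poly (sph_diag_poly n l p m) (real u)"
        unfolding q au bu using sph_entry_diag[OF pm0 l(2,1) upm] by simp
      moreover have "sph_diag_const n l p m \<noteq> 0" using sph_diag_const_pos[OF l(1), of p m] by linarith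
      ultimately show "C * (\<beta> l * poly (sph_diag_poly n l p m) (real u)) = \<alpha> l * sph_entry n l (int t - int s) b a"
        unfolding \<alpha>_def C_def by (simp add: field_simps)
    qed
    finally show ?thesis .
  qed
  then show ?thesis unfolding p_def m_def by blast
qed

lemma prod_tensor_entries_outside:
  fixes A :: "nat \<Rightarrow> complex mat"
  assumes S: "S \<subseteq> {..<n}" and A1: "\<forall>i<n. i \<notin> S \<longrightarrow> A i = 1\<^sub>m 2"
    and XS: "XS \<subseteq> S" and YS: "YS \<subseteq> S" and Z: "Z \<subseteq> {..<n} - S" and Z': "Z' \<subseteq> {..<n} - S"
  shows "(\<Prod>i<n. A i $$ (indicator (XS \<union> Z) i, indicator (YS \<union> Z') i)) =
         (\<Prod>i\<in>S. A i $$ (indicator XS i, indicator YS i)) * (if Z = Z' then 1 else 0)"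
proof -
  have "(\<Prod>i<n. A i $$ (indicator (XS \<union> Z) i, indicator (YS \<union> Z') i)) =
     (\<Prod>i\<in>{..<n} - S. A i $$ (indicator (XS \<union> Z) i, indicator (YS \<union> Z') i)) *
     (\<Prod>i\<in>S. A i $$ (indicator (XS \<union> Z) i, indicator (YS \<union> Z') i))"
    by (rule prod.subset_diff[OF S finite_lessThan])
  also have "(\<Prod>i\<in>S. A i $$ (indicator (XS \<union> Z) i, indicator (YS \<union> Z') i)) =
      (\<Prod>i\<in>S. A i $$ (indicator XS i, indicator YS i))"
    using Z Z' by (intro prod.cong refl) (auto simp: indicator_def)
  also have "(\<Prod>i\<in>{..<n} - S. A i $$ (indicator (XS \<union> Z) i, indicator (YS \<union> Z') i)) =
      (\<Prod>i\<in>{..<n} - S. (1\<^sub>m 2 :: complex mat) $$ (indicator Z i, indicator Z' i))"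
    using XS YS A1 by (intro prod.cong refl) (auto simp: indicator_def)
  also have "\<dots> = (if Z = Z' then 1 else 0)"
  proof (cases "Z = Z'")
    case True
    then show ?thesis by (auto simp: indicator_def intro!: prod.neutral)
  next
    case False
    then obtain i where i: "i \<in> {..<n} - S" "(i \<in> Z) \<noteq> (i \<in> Z')" using Z Z' by blast
    have "(1\<^sub>m 2 :: complex mat) $$ (indicator Z i, indicator Z' i) = 0" using i(2) by (auto simp: indicator_def)
    then have "(\<Prod>i\<in>{..<n} - S. (1\<^sub>m 2 :: complex mat) $$ (indicator Z i, indicator Z' i)) = 0"
      using i(1) by (intro prod_zero) auto
    then show ?thesis using False by simp
  qed
  finally show ?thesis by simp
qed

lemma dicke_sandwich_index:
  fixes A :: "nat \<Rightarrow> complex mat"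
  assumes b: "b \<le> n" and a: "a \<le> n"
  defines "cb \<equiv> complex_of_real (1 / sqrt (real (n choose b)))"
    and "ca \<equiv> complex_of_real (1 / sqrt (real (n choose a)))"
  shows "(cadj (dicke_map n) * tensor_ops n A * dicke_map n) $$ (b,a) =
    (\<Sum>Y\<in>Pow {..<n}. \<Sum>X\<in>Pow {..<n}.
       (if card X = b then cb else 0) * (\<Prod>i<n. A i $$ (indicator X i, indicator Y i)) * (if card Y = a then ca else 0))"
proof -
  let ?D = "dicke_map n" and ?E = "tensor_ops n A"
  define G where "G X Y = (if card X = b then cb else 0) * (\<Prod>i<n. A i $$ (indicator X i, indicator Y i)) *
    (if card Y = a then ca else 0)" for X Y
  have cD: "cadj ?D \<in> carrier_mat (n+1) (2^n)" using cadj_carrier_mat[OF dicke_map_carrier] .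
  have cDE: "cadj ?D * ?E \<in> carrier_mat (n+1) (2^n)" using cD tensor_ops_carrier by auto
  have "(cadj ?D * ?E * ?D) $$ (b,a) = (\<Sum>y<2^n. (\<Sum>x<2^n. cadj ?D $$ (b,x) * ?E $$ (x,y)) * ?D $$ (y,a))"
    using index_mult_mat_sum[OF cDE dicke_map_carrier] index_mult_mat_sum[OF cD tensor_ops_carrier] a b
    by simp
  also have "\<dots> = (\<Sum>y<2^n. \<Sum>x<2^n. G (bitset n x) (bitset n y))"
  proof (intro sum.cong refl)
    fix y :: nat assume y: "y \<in> {..<2^n}"
    have "cadj ?D $$ (b,x) = (if card (bitset n x) = b then cb else 0)" if "x < 2^n" for x
      using b that unfolding cb_def by (auto simp: dicke_map_index)
    moreover have "?D $$ (y,a) = (if card (bitset n y) = a then ca else 0)"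
      using a y unfolding ca_def by (auto simp: dicke_map_index)
    moreover have "?E $$ (x,y) = (\<Prod>i<n. A i $$ (indicator (bitset n x) i, indicator (bitset n y) i))"
      if "x < 2^n" for x
      using y that by (auto simp: tensor_ops_index)
    ultimately show "(\<Sum>x<2^n. cadj ?D $$ (b,x) * ?E $$ (x,y)) * ?D $$ (y,a) = (\<Sum>x<2^n. G (bitset n x) (bitset n y))"
      unfolding sum_distrib_right G_def by (intro sum.cong refl) simp
  qed
  also have "\<dots> = (\<Sum>y<2^n. \<Sum>X\<in>Pow {..<n}. G X (bitset n y))"
    by (intro sum.cong refl) (rule sum_bitset)
  also have "\<dots> = (\<Sum>Y\<in>Pow {..<n}. \<Sum>X\<in>Pow {..<n}. G X Y)"
    by (rule sum_bitset)
  finally show ?thesis unfolding G_def .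
qed

lemma sum_Pow_compl_dicke_weights:
  assumes S: "S \<subseteq> {..<n}"
  shows "(\<Sum>Z\<in>Pow ({..<n} - S).
      (if s + card Z = b then complex_of_real (1 / sqrt (real (n choose b))) else 0) *
      (if t + card Z = a then complex_of_real (1 / sqrt (real (n choose a))) else 0)) =
    complex_of_real (sym_block n (card S) s t b a)"
proof -
  define w where "w = card S"
  define cab where "cab = complex_of_real (1 / sqrt (real (n choose b) * real (n choose a)))"
  have "card ({..<n} - S) = n - w"
    unfolding w_def using S by (simp add: card_Diff_subset finite_subset)
  have "(\<Sum>Z\<in>Pow ({..<n} - S).
      (if s + card Z = b then complex_of_real (1 / sqrt (real (n choose b))) else 0) *
      (if t + card Z = a then complex_of_real (1 / sqrt (real (n choose a))) else 0)) =
    (\<Sum>Z\<in>Pow ({..<n} - S). (\<lambda>r. if s + r = b \<and> t + r = a then cab else 0) (card Z))"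
    by (intro sum.cong refl) (simp add: cab_def real_sqrt_mult)
  also have "\<dots> = (\<Sum>r\<le>n - w. of_nat ((n - w) choose r) * (if s + r = b \<and> t + r = a then cab else 0))"
    using sum_Pow_card[of "{..<n} - S" "\<lambda>r. if s + r = b \<and> t + r = a then cab else 0"] \<open>card _ = n - w\<close>
    by simp
  also have "\<dots> = (\<Sum>r\<le>n - w. if r = a - t then
      (if t \<le> a \<and> b + t = a + s then of_nat ((n - w) choose (a - t)) * cab else 0) else 0)"
  proof (intro sum.cong refl)
    fix r
    have "(s + r = b \<and> t + r = a) = (r = a - t \<and> t \<le> a \<and> b + t = a + s)" by arith
    then show "of_nat ((n - w) choose r) * (if s + r = b \<and> t + r = a then cab else 0) =
      (if r = a - t then (if t \<le> a \<and> b + t = a + s then of_nat ((n - w) choose (a - t)) * cab else 0) else 0)"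
      by auto
  qed
  also have "\<dots> = (if t \<le> a \<and> b + t = a + s then of_nat ((n - w) choose (a - t)) * cab else 0)"
    by (cases "a - t \<le> n - w") (auto simp: sum.delta')
  also have "\<dots> = complex_of_real (sym_block n w s t b a)"
    unfolding sym_block_def cab_def by (auto simp: divide_inverse)
  finally show ?thesis unfolding w_def .
qed

lemma dicke_compress_tensor_ops_index:
  fixes A :: "nat \<Rightarrow> complex mat"
  assumes S: "S \<subseteq> {..<n}" and A1: "\<forall>i<n. i \<notin> S \<longrightarrow> A i = 1\<^sub>m 2" and b: "b \<le> n" and a: "a \<le> n"
  shows "(cadj (dicke_map n) * tensor_ops n A * dicke_map n) $$ (b,a) =
    (\<Sum>XS\<in>Pow S. \<Sum>YS\<in>Pow S. (\<Prod>i\<in>S. A i $$ (indicator XS i, indicator YS i)) *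
        complex_of_real (sym_block n (card S) (card XS) (card YS) b a))"
proof -
  define cb where "cb = complex_of_real (1 / sqrt (real (n choose b)))"
  define ca where "ca = complex_of_real (1 / sqrt (real (n choose a)))"
  define e where "e XS YS = (\<Prod>i\<in>S. A i $$ (indicator XS i, indicator YS i))" for XS YS
  define wt where "wt s t Z = (if s + card Z = b then cb else 0) * (if t + card Z = a then ca else 0)" for s t :: nat and Z :: "nat set"
  have fS: "finite S" using S finite_subset by blast
  have "(cadj (dicke_map n) * tensor_ops n A * dicke_map n) $$ (b,a) =
    (\<Sum>YS\<in>Pow S. \<Sum>Z'\<in>Pow ({..<n} - S). \<Sum>XS\<in>Pow S. \<Sum>Z\<in>Pow ({..<n} - S).
      (if card (XS \<union> Z) = b then cb else 0) * (\<Prod>i<n. A i $$ (indicator (XS \<union> Z) i, indicator (YS \<union> Z') i)) *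
      (if card (YS \<union> Z') = a then ca else 0))"
    unfolding dicke_sandwich_index[OF b a] cb_def[symmetric] ca_def[symmetric]
    by (simp only: sum_Pow_Un_split[OF finite_lessThan S])
  also have "\<dots> = (\<Sum>YS\<in>Pow S. \<Sum>Z'\<in>Pow ({..<n} - S). \<Sum>XS\<in>Pow S. \<Sum>Z\<in>Pow ({..<n} - S).
      if Z = Z' then e XS YS * wt (card XS) (card YS) Z' else 0)"
  proof (intro sum.cong refl)
    fix YS Z' XS Z assume h: "YS \<in> Pow S" "Z' \<in> Pow ({..<n} - S)" "XS \<in> Pow S" "Z \<in> Pow ({..<n} - S)"
    have f: "finite XS" "finite Z" "finite YS" "finite Z'" using h fS by (auto intro: finite_subset)
    have "XS \<inter> Z = {}" "YS \<inter> Z' = {}" using h by auto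
    then have "card (XS \<union> Z) = card XS + card Z" "card (YS \<union> Z') = card YS + card Z'"
      using f by (simp_all add: card_Un_disjoint)
    then show "(if card (XS \<union> Z) = b then cb else 0) * (\<Prod>i<n. A i $$ (indicator (XS \<union> Z) i, indicator (YS \<union> Z') i)) *
        (if card (YS \<union> Z') = a then ca else 0) = (if Z = Z' then e XS YS * wt (card XS) (card YS) Z' else 0)"
      unfolding e_def wt_def using prod_tensor_entries_outside[OF S A1] h by (simp add: add.commute)
  qed
  also have "\<dots> = (\<Sum>YS\<in>Pow S. \<Sum>XS\<in>Pow S. e XS YS * (\<Sum>Z\<in>Pow ({..<n} - S). wt (card XS) (card YS) Z))"
    by (simp add: sum.delta' sum_distrib_left sum.swap[of _ "Pow ({..<n} - S)" "Pow S"])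
  also have "\<dots> = (\<Sum>XS\<in>Pow S. \<Sum>YS\<in>Pow S. e XS YS * complex_of_real (sym_block n (card S) (card XS) (card YS) b a))"
    unfolding wt_def cb_def ca_def sum_Pow_compl_dicke_weights[OF S] by (rule sum.swap)
  finally show ?thesis unfolding e_def .
qed

section \<open>Transfer of the Knill--Laflamme conditions\<close>

text \<open>The Knill--Laflamme condition for the code spanned by the columns of \<open>V\<close>, for an operator
  on \<open>\<complex>\<^sup>N\<close> given by its matrix entries \<open>f\<close>; entries rather than matrices, so that linear
  combinations of operators are plain sums.\<close>
definition sesq_form :: "nat \<Rightarrow> (nat \<Rightarrow> nat \<Rightarrow> complex) \<Rightarrow> complex vec \<Rightarrow> complex vec \<Rightarrow> complex" where
  "sesq_form N f u v = (\<Sum>b<N. \<Sum>a<N. cnj (u $ b) * f b a * v $ a)"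

definition code_scalar :: "nat \<Rightarrow> nat \<Rightarrow> complex mat \<Rightarrow> (nat \<Rightarrow> nat \<Rightarrow> complex) \<Rightarrow> bool" where
  "code_scalar N K V f \<longleftrightarrow>
     (\<exists>c. \<forall>x\<in>carrier_vec K. \<forall>y\<in>carrier_vec K. sesq_form N f (V *\<^sub>v x) (V *\<^sub>v y) = c * cinner x y)"

lemma cinner_eq_sesq_form:
  assumes "M \<in> carrier_mat N N" "u \<in> carrier_vec N" "v \<in> carrier_vec N"
  shows "cinner u (M *\<^sub>v v) = sesq_form N (\<lambda>b a. M $$ (b,a)) u v"
  unfolding cinner_def sesq_form_def using assms
  by (simp add: scalar_prod_def atLeast0LessThan sum_distrib_left mult.assoc)

lemma code_scalar_cong:
  assumes "\<forall>b<N. \<forall>a<N. f b a = g b a" "code_scalar N K V f"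
  shows "code_scalar N K V g"
proof -
  have "sesq_form N f u v = sesq_form N g u v" for u v
    unfolding sesq_form_def using assms(1) by (intro sum.cong refl) auto
  then show ?thesis using assms(2) unfolding code_scalar_def by simp
qed

lemma code_scalar_sum:
  assumes "finite I" "\<forall>i\<in>I. code_scalar N K V (F i)"
  shows "code_scalar N K V (\<lambda>b a. \<Sum>i\<in>I. F i b a)"
proof -
  obtain c where c: "\<forall>i\<in>I. \<forall>x\<in>carrier_vec K. \<forall>y\<in>carrier_vec K. sesq_form N (F i) (V *\<^sub>v x) (V *\<^sub>v y) = c i * cinner x y"
    using assms(2) unfolding code_scalar_def by metis
  have "sesq_form N (\<lambda>b a. \<Sum>i\<in>I. F i b a) u v = (\<Sum>i\<in>I. sesq_form N (F i) u v)" for u v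
    unfolding sesq_form_def by (simp add: sum_distrib_left sum_distrib_right sum.swap[of _ I])
  then show ?thesis unfolding code_scalar_def using c by (intro exI[of _ "\<Sum>i\<in>I. c i"]) (simp add: sum_distrib_right)
qed

lemma code_scalar_scale:
  assumes "code_scalar N K V f"
  shows "code_scalar N K V (\<lambda>b a. z * f b a)"
proof -
  have "sesq_form N (\<lambda>b a. z * f b a) u v = z * sesq_form N f u v" for u v
    unfolding sesq_form_def sum_distrib_left by (intro sum.cong refl) (simp add: mult_ac)
  moreover obtain c where "\<forall>x\<in>carrier_vec K. \<forall>y\<in>carrier_vec K. sesq_form N f (V *\<^sub>v x) (V *\<^sub>v y) = c * cinner x y"
    using assms unfolding code_scalar_def by blast
  ultimately show ?thesis unfolding code_scalar_def by (intro exI[of _ "z * c"]) simp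
qed

lemma code_scalar_sph_entry:
  assumes V: "isometry_mat (n+1) K V" and sc: "spin_code_distance n d (image_mat V)"
    and k: "k < d" "k \<le> n" "\<bar>q\<bar> \<le> int k"
  shows "code_scalar (n+1) K V (\<lambda>b a. complex_of_real (sph_entry n k q b a))"
proof -
  let ?T = "sph_tensor n k q"
  obtain c where c: "\<forall>\<phi>\<in>image_mat V. \<forall>\<psi>\<in>image_mat V. cinner \<phi> (?T *\<^sub>v \<psi>) = c * cinner \<phi> \<psi>"
    using sc k unfolding spin_code_distance_def by blast
  have cT: "?T \<in> carrier_mat (n+1) (n+1)" unfolding sph_tensor_def by simp
  have cV: "V \<in> carrier_mat (n+1) K" using V unfolding isometry_mat_def by simp
  have "code_scalar (n+1) K V (\<lambda>b a. ?T $$ (b,a))" unfolding code_scalar_def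
  proof (intro exI[of _ c] ballI)
    fix x y :: "complex vec" assume x: "x \<in> carrier_vec K" and y: "y \<in> carrier_vec K"
    have "V *\<^sub>v x \<in> image_mat V" "V *\<^sub>v y \<in> image_mat V" unfolding image_mat_def using cV x y by auto
    moreover have "V *\<^sub>v x \<in> carrier_vec (n+1)" "V *\<^sub>v y \<in> carrier_vec (n+1)" using cV x y by auto
    ultimately show "sesq_form (n+1) (\<lambda>b a. ?T $$ (b,a)) (V *\<^sub>v x) (V *\<^sub>v y) = c * cinner x y"
      using c cinner_eq_sesq_form[OF cT] cinner_isometry[OF V x y] by metis
  qed
  then show ?thesis by (rule code_scalar_cong[rotated]) (simp add: sph_tensor_index)
qed

lemma code_scalar_sym_block:
  assumes V: "isometry_mat (n+1) K V" and sc: "spin_code_distance n d (image_mat V)"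
    and st: "s \<le> w" "t \<le> w" "w \<le> n" "w < d"
  shows "code_scalar (n+1) K V (\<lambda>b a. complex_of_real (sym_block n w s t b a))"
proof -
  obtain \<alpha> where \<alpha>: "\<forall>b a. b \<le> n \<longrightarrow> a \<le> n \<longrightarrow>
     sym_block n w s t b a = (\<Sum>l\<in>{(t-s)+(s-t)..w}. \<alpha> l * sph_entry n l (int t - int s) b a)"
    using sym_block_in_sph_span[OF st(1-3)] by blast
  have "code_scalar (n+1) K V (\<lambda>b a. \<Sum>l\<in>{(t-s)+(s-t)..w}.
      complex_of_real (\<alpha> l) * complex_of_real (sph_entry n l (int t - int s) b a))"
    using st by (intro code_scalar_sum ballI code_scalar_scale code_scalar_sph_entry[OF V sc]) auto
  then show ?thesis by (rule code_scalar_cong[rotated]) (simp add: \<alpha>)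
qed

lemma code_scalar_dicke_compress:
  fixes A :: "nat \<Rightarrow> complex mat"
  assumes V: "isometry_mat (n+1) K V" and sc: "spin_code_distance n d (image_mat V)"
    and S: "S \<subseteq> {..<n}" and A1: "\<forall>i<n. i \<notin> S \<longrightarrow> A i = 1\<^sub>m 2" and Sd: "card S < d"
  shows "code_scalar (n+1) K V (\<lambda>b a. (cadj (dicke_map n) * tensor_ops n A * dicke_map n) $$ (b,a))"
proof -
  have fS: "finite S" using S finite_subset by blast
  have "card XS \<le> card S" if "XS \<in> Pow S" for XS using that fS by (auto intro: card_mono)
  moreover have "card S \<le> n" using card_mono[OF _ S] by simp
  ultimately have "code_scalar (n+1) K V (\<lambda>b a. \<Sum>XS\<in>Pow S. \<Sum>YS\<in>Pow S.
      (\<Prod>i\<in>S. A i $$ (indicator XS i, indicator YS i)) * complex_of_real (sym_block n (card S) (card XS) (card YS) b a))"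
    using Sd fS by (intro code_scalar_sum ballI code_scalar_scale code_scalar_sym_block[OF V sc]) auto
  then show ?thesis
    by (rule code_scalar_cong[rotated]) (auto simp only: dicke_compress_tensor_ops_index[OF S A1])
qed

lemma code_scalar_sandwich:
  assumes V: "isometry_mat N K V" and D: "isometry_mat m N D" and E: "E \<in> carrier_mat m m"
    and scalar: "code_scalar N K V (\<lambda>b a. (cadj D * E * D) $$ (b,a))"
  shows "\<exists>c. \<forall>\<phi>\<in>image_mat (D * V). \<forall>\<psi>\<in>image_mat (D * V). cinner \<phi> (E *\<^sub>v \<psi>) = c * cinner \<phi> \<psi>"
proof -
  have cV: "V \<in> carrier_mat N K" and cD: "D \<in> carrier_mat m N"
    using V D unfolding isometry_mat_def by auto
  have cD': "cadj D \<in> carrier_mat N m" using cadj_carrier_mat[OF cD] .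
  obtain c where c: "\<forall>x\<in>carrier_vec K. \<forall>y\<in>carrier_vec K.
      sesq_form N (\<lambda>b a. (cadj D * E * D) $$ (b,a)) (V *\<^sub>v x) (V *\<^sub>v y) = c * cinner x y"
    using scalar unfolding code_scalar_def by blast
  have "cinner ((D * V) *\<^sub>v x) (E *\<^sub>v ((D * V) *\<^sub>v y)) = c * cinner ((D * V) *\<^sub>v x) ((D * V) *\<^sub>v y)"
    if x: "x \<in> carrier_vec K" and y: "y \<in> carrier_vec K" for x y
  proof -
    have Vx: "V *\<^sub>v x \<in> carrier_vec N" and Vy: "V *\<^sub>v y \<in> carrier_vec N" using cV x y by auto
    have "cinner ((D * V) *\<^sub>v x) (E *\<^sub>v ((D * V) *\<^sub>v y)) = cinner (V *\<^sub>v x) (cadj D *\<^sub>v (E *\<^sub>v (D *\<^sub>v (V *\<^sub>v y))))"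
      using cinner_mult_mat_vec_left[OF cD Vx] cD cV E x y Vy by simp
    also have "cadj D *\<^sub>v (E *\<^sub>v (D *\<^sub>v (V *\<^sub>v y))) = (cadj D * E * D) *\<^sub>v (V *\<^sub>v y)"
      using assoc_mult_mat_vec[OF mult_carrier_mat[OF cD' E] cD Vy] assoc_mult_mat_vec[OF cD' E, of "D *\<^sub>v (V *\<^sub>v y)"]
        cD Vy by simp
    also have "cinner (V *\<^sub>v x) \<dots> = c * cinner x y"
      using cinner_eq_sesq_form[OF _ Vx Vy, of "cadj D * E * D"] cD cD' E c x y by simp
    also have "cinner x y = cinner ((D * V) *\<^sub>v x) ((D * V) *\<^sub>v y)"
      using cinner_isometry[OF isometry_mat_mult[OF D V] x y] by simp
    finally show ?thesis .
  qed
  then show ?thesis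
    unfolding image_mat_def using cD cV by (intro exI[of _ c]) auto
qed

lemma qubit_code_distance_dicke_image:
  assumes V: "isometry_mat (n+1) K V" and sc: "spin_code_distance n d (image_mat V)"
  shows "qubit_code_distance n d (image_mat (dicke_map n * V))"
  unfolding qubit_code_distance_def
proof (intro allI impI)
  fix p assume p: "(\<forall>i<n. p i < 4) \<and> pauli_weight n p < d"
  define S where "S = {i. i < n \<and> p i \<noteq> 0}"
  have S: "S \<subseteq> {..<n}" and Sd: "card S < d" using p unfolding S_def pauli_weight_def by auto
  have A1: "\<forall>i<n. i \<notin> S \<longrightarrow> pauli1 (p i) = 1\<^sub>m 2" unfolding S_def pauli1_def by auto
  have "code_scalar (n+1) K V (\<lambda>b a. (cadj (dicke_map n) * pauli_op n p * dicke_map n) $$ (b,a))"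
    unfolding pauli_op_def by (rule code_scalar_dicke_compress[OF V sc S A1 Sd])
  then show "\<exists>c. \<forall>\<phi>\<in>image_mat (dicke_map n * V). \<forall>\<psi>\<in>image_mat (dicke_map n * V).
      cinner \<phi> (pauli_op n p *\<^sub>v \<psi>) = c * cinner \<phi> \<psi>"
    using code_scalar_sandwich[OF V dicke_map_isometry] tensor_ops_carrier unfolding pauli_op_def by blast
qed

theorem theorem1:
  fixes G :: "complex mat set" and rho :: "complex mat \<Rightarrow> complex mat"
    and n K d :: nat and V :: "complex mat"
  assumes "finite_subgroup_SU2 G"
    and "irreducible_rep G K rho"
    and "spin_code_with_isometry n K d V"
    and "\<forall>g\<in>G. wignerD n g * V = V * rho g"
  shows "perm_invariant_code n (image_mat (dicke_map n * V))
       \<and> code_dim (dicke_map n * V) = K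
       \<and> qubit_code_distance n d (image_mat (dicke_map n * V))
       \<and> (\<forall>g\<in>G. tensor_pow n g * (dicke_map n * V) = (dicke_map n * V) * rho g)"
proof (intro conjI ballI)
  have V: "isometry_mat (n+1) K V" and sc: "spin_code_distance n d (image_mat V)"
    using assms(3) unfolding spin_code_with_isometry_def by auto
  then have cV: "V \<in> carrier_mat (n+1) K" unfolding isometry_mat_def by simp
  show "perm_invariant_code n (image_mat (dicke_map n * V))"
    using perm_invariant_dicke_image[OF cV] .
  show "code_dim (dicke_map n * V) = K"
    unfolding code_dim_def using rank_isometry[OF isometry_mat_mult[OF dicke_map_isometry V]] by simp
  show "qubit_code_distance n d (image_mat (dicke_map n * V))"
    using qubit_code_distance_dicke_image[OF V sc] .
  fix g assume g: "g \<in> G"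
  have "rho g \<in> carrier_mat K K"
    using assms(2) g unfolding irreducible_rep_def unitary_rep_def unitary_mat_def by auto
  moreover have cT: "tensor_pow n g \<in> carrier_mat (2^n) (2^n)"
    unfolding tensor_pow_def by (rule tensor_ops_carrier)
  ultimately have "tensor_pow n g * (dicke_map n * V) = (tensor_pow n g * dicke_map n) * V"
    using assoc_mult_mat[OF cT dicke_map_carrier cV] by simp
  also have "\<dots> = dicke_map n * (wignerD n g * V)"
    using assoc_mult_mat[OF dicke_map_carrier wignerD_carrier cV] by (simp add: tensor_pow_dicke_map)
  also have "\<dots> = (dicke_map n * V) * rho g"
    using assms(4) g assoc_mult_mat[OF dicke_map_carrier cV \<open>rho g \<in> carrier_mat K K\<close>] by simp
  finally show "tensor_pow n g * (dicke_map n * V) = (dicke_map n * V) * rho g" .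
qed

end
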